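(* Let $K$ be a compact Hausdorff space and let $\mu\in Seq^{\alpha}(\mathrm{co}\,\Delta_K)$ for some ordinal $\alpha<\omega_1$. If $\nu\in M(K)$ is absolutely continuous with respect to $\mu$, then $\nu\in Seq^{\alpha+1}(\mathrm{span}\,\Delta_K)$. If in addition $\nu\in M^+(K)$, then $\nu\in Seq^{\alpha+1}(M^+(K)\cap \mathrm{span}\,\Delta_K)$.
   Context: $C(K)$ is the Banach space of continuous real-valued functions on $K$, and $M(K)=C(K)^*$ is the space of Radon signed measures on $K$, always equipped with the weak$^*$ topology. $M^+(K)$ denotes the non-negative Radon measures. For $t\in K$, $\delta_t$ is the Dirac measure at $t$, $\Delta_K=\{\delta_t:t\in K\}$, $\mathrm{co}\,\Delta_K$ is its convex hull and $\mathrm{span}\,\Delta_K$ its linear span in $M(K)$. For $A\subseteq M(K)$, define $Seq^0(A)=A$, $Seq^{\alpha+1}(A)$ = the set of all limits of weak$^*$-convergent sequences in $Seq^{\alpha}(A)$, and $Seq^\alpha(A)=\bigcup_{\beta<\alpha}Seq^\beta(A)$ for limit ordinals $\alpha$. *)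

theory Defs
  imports "HOL-Probability.Probability"
begin

text \<open>Throughout, the compact Hausdorff space K is the whole of a type 'a of class t2_space
with compact UNIV.  A (signed) measure on K is represented as a real-valued set function on the
Borel sets of K, taking the value 0 on non-Borel sets (canonical representative).\<close>

definition real_countably_additive :: "('a::topological_space set \<Rightarrow> real) \<Rightarrow> bool" where
  "real_countably_additive m \<longleftrightarrow>
     (\<forall>A :: nat \<Rightarrow> 'a set. range A \<subseteq> sets borel \<longrightarrow> disjoint_family A \<longrightarrow>
        (\<lambda>i. m (A i)) sums m (\<Union>i. A i))"

definition radon_pos :: "('a::topological_space set \<Rightarrow> real) \<Rightarrow> bool" where
  "radon_pos m \<longleftrightarrow>
     (\<forall>B. B \<notin> sets borel \<longrightarrow> m B = 0) \<and>
     (\<forall>B\<in>sets borel. 0 \<le> m B) \<and>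
     real_countably_additive m \<and>
     (\<forall>B\<in>sets borel. m B = (SUP C\<in>{C. compact C \<and> C \<subseteq> B}. m C))"

definition MK :: "('a::topological_space set \<Rightarrow> real) set" where
  "MK = {\<nu>. \<exists>m1 m2. radon_pos m1 \<and> radon_pos m2 \<and> \<nu> = (\<lambda>B. m1 B - m2 B)}"

definition MK_pos :: "('a::topological_space set \<Rightarrow> real) set" where
  "MK_pos = {\<nu>\<in>MK. \<forall>B. 0 \<le> \<nu> B}"

definition pos_var :: "('a::topological_space set \<Rightarrow> real) \<Rightarrow> 'a set \<Rightarrow> real" where
  "pos_var \<nu> B = (if B \<in> sets borel then (SUP C\<in>{C\<in>sets borel. C \<subseteq> B}. \<nu> C) else 0)"

definition neg_var :: "('a::topological_space set \<Rightarrow> real) \<Rightarrow> 'a set \<Rightarrow> real" where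
  "neg_var \<nu> = pos_var (\<lambda>B. - \<nu> B)"

definition tot_var :: "('a::topological_space set \<Rightarrow> real) \<Rightarrow> 'a set \<Rightarrow> real" where
  "tot_var \<nu> B = pos_var \<nu> B + neg_var \<nu> B"

definition to_measure :: "('a::topological_space set \<Rightarrow> real) \<Rightarrow> 'a measure" where
  "to_measure m = measure_of UNIV (sets borel) (\<lambda>B. ennreal (m B))"

definition sint :: "('a::topological_space set \<Rightarrow> real) \<Rightarrow> ('a \<Rightarrow> real) \<Rightarrow> real" where
  "sint \<nu> f = integral\<^sup>L (to_measure (pos_var \<nu>)) f - integral\<^sup>L (to_measure (neg_var \<nu>)) f"

text \<open>Weak* convergence in M(K)=C(K)^*: convergence against every continuous real function.\<close>
definition wstar_conv :: "(nat \<Rightarrow> 'a::topological_space set \<Rightarrow> real) \<Rightarrow> ('a set \<Rightarrow> real) \<Rightarrow> bool" where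
  "wstar_conv s \<nu> \<longleftrightarrow>
     (\<forall>f::'a \<Rightarrow> real. continuous_on UNIV f \<longrightarrow> (\<lambda>n. sint (s n) f) \<longlonglongrightarrow> sint \<nu> f)"

definition seq_cl :: "('a::topological_space set \<Rightarrow> real) set \<Rightarrow> ('a set \<Rightarrow> real) set" where
  "seq_cl A = {\<nu>\<in>MK. \<exists>s. (\<forall>n. s n \<in> A) \<and> wstar_conv s \<nu>}"

text \<open>Ordinals are represented as elements of the field of a well-order r.
 An element i with no strict predecessor is 0; i is the successor of j if j is its immediate
 strict predecessor; otherwise i is a limit.\<close>
definition imm_pred :: "'i rel \<Rightarrow> 'i \<Rightarrow> 'i \<Rightarrow> bool" where
  "imm_pred r j i \<longleftrightarrow> (j, i) \<in> r \<and> j \<noteq> i \<and> (\<forall>k. (j, k) \<in> r \<and> (k, i) \<in> r \<longrightarrow> k = j \<or> k = i)"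

definition Seq :: "'i rel \<Rightarrow> 'i \<Rightarrow> ('a::topological_space set \<Rightarrow> real) set \<Rightarrow> ('a set \<Rightarrow> real) set" where
  "Seq r \<alpha> A = wfrec (r - Id)
     (\<lambda>S i. if Order_Relation.underS r i = {} then A
            else if (\<exists>j. imm_pred r j i) then seq_cl (S (SOME j. imm_pred r j i))
            else (\<Union>j\<in>Order_Relation.underS r i. S j)) \<alpha>"

definition dirac :: "'a::topological_space \<Rightarrow> 'a set \<Rightarrow> real" where
  "dirac t B = (if B \<in> sets borel \<and> t \<in> B then 1 else 0)"

definition co_Delta :: "('a::topological_space set \<Rightarrow> real) set" where
  "co_Delta = {(\<lambda>B. \<Sum>t\<in>F. c t * dirac t B) | F c. finite F \<and> F \<noteq> {} \<and>
                 (\<forall>t\<in>F. 0 \<le> c t) \<and> sum c F = 1}"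

definition span_Delta :: "('a::topological_space set \<Rightarrow> real) set" where
  "span_Delta = {(\<lambda>B. \<Sum>t\<in>F. c t * dirac t B) | F c. finite F}"

definition abs_cont :: "('a::topological_space set \<Rightarrow> real) \<Rightarrow> ('a set \<Rightarrow> real) \<Rightarrow> bool" where
  "abs_cont \<nu> \<mu> \<longleftrightarrow> (\<forall>B\<in>sets borel. tot_var \<mu> B = 0 \<longrightarrow> \<nu> B = 0)"

end

theory Submission
  imports Defs
begin

text \<open>Every measure in \<open>M(K)\<close> has an integrable density with respect to a finite Radon measure,
  so \<open>\<nu> \<ll> \<mu>\<close> means \<open>\<nu> = k \<mu>\<close> for some \<open>k \<in> L\<^sup>1(|\<mu>|)\<close>. By Urysohn's lemma and inner
  regularity, continuous functions are dense in \<open>L\<^sup>1(|\<mu>|)\<close>, so \<open>\<nu>\<close> is the weak* limit of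
  \<open>g\<^sub>n \<mu>\<close> with \<open>g\<^sub>n\<close> continuous, and \<open>g\<^sub>n \<ge> 0\<close> can be arranged when \<open>\<mu>, \<nu> \<ge> 0\<close>.
  Multiplication by a fixed continuous \<open>g\<close> is weak* sequentially continuous and maps
  \<open>co \<Delta>\<^sub>K\<close> into \<open>span \<Delta>\<^sub>K\<close> (into its non-negative part if \<open>g \<ge> 0\<close>), so by transfinite
  induction it maps \<open>Seq\<^sup>\<alpha>(co \<Delta>\<^sub>K)\<close> into \<open>Seq\<^sup>\<alpha>(span \<Delta>\<^sub>K)\<close>; hence \<open>\<nu> \<in> Seq\<^sup>\<alpha>\<^sup>+\<^sup>1(span \<Delta>\<^sub>K)\<close>.\<close>

section \<open>Finite Radon measures\<close>

lemma sigma_sets_UNIV_borel [simp]: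
  "sigma_sets UNIV (sets borel) = sets (borel :: 'a::topological_space measure)"
  using sets.sigma_sets_eq[of "borel :: 'a measure"] by simp

lemma space_to_measure [simp]: "space (to_measure m) = UNIV"
  by (simp add: to_measure_def)

lemma sets_to_measure [simp]: "sets (to_measure m) = sets borel"
  unfolding to_measure_def by (subst sets_measure_of) auto

lemma real_countably_additive_empty:
  assumes "real_countably_additive m" shows "m {} = 0"
proof -
  have "(\<lambda>i::nat. m {}) sums m (\<Union>i::nat. {})"
    using assms unfolding real_countably_additive_def by (auto simp: disjoint_family_on_def)
  then have "summable (\<lambda>i::nat. m {})" by (rule sums_summable)
  then show ?thesis by (simp add: summable_const_iff)
qed

lemma radon_pos_not_borel: "radon_pos m \<Longrightarrow> B \<notin> sets borel \<Longrightarrow> m B = 0"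
  unfolding radon_pos_def by blast

lemma radon_pos_nonneg: "radon_pos m \<Longrightarrow> 0 \<le> m B"
  by (cases "B \<in> sets borel") (auto simp: radon_pos_def)

lemma radon_pos_countably_additive: "radon_pos m \<Longrightarrow> real_countably_additive m"
  unfolding radon_pos_def by blast

lemma emeasure_to_measure:
  assumes r: "radon_pos m" and B: "B \<in> sets borel"
  shows "emeasure (to_measure m) B = ennreal (m B)"
proof -
  have rca: "real_countably_additive m" by (rule radon_pos_countably_additive[OF r])
  have ca: "countably_additive (sets borel) (\<lambda>B. ennreal (m B))"
    unfolding countably_additive_def
  proof (intro allI impI)
    fix A :: "nat \<Rightarrow> 'a set" assume A: "range A \<subseteq> sets borel" "disjoint_family A"
    then have "(\<lambda>i. m (A i)) sums m (\<Union>i. A i)"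
      using rca unfolding real_countably_additive_def by blast
    then show "(\<Sum>i. ennreal (m (A i))) = ennreal (m (\<Union>(range A)))"
      using radon_pos_nonneg[OF r] by (intro suminf_ennreal_eq) auto
  qed
  have pos: "positive (sets borel) (\<lambda>B. ennreal (m B))"
    using real_countably_additive_empty[OF rca] by (simp add: positive_def)
  show ?thesis unfolding to_measure_def
    using emeasure_measure_of_sigma[OF _ pos ca B]
      sets.sigma_algebra_axioms[of "borel :: 'a measure"]
    by simp
qed

lemma measure_to_measure: assumes r: "radon_pos m" shows "measure (to_measure m) = m"
proof
  fix B show "measure (to_measure m) B = m B"
  proof (cases "B \<in> sets borel")
    case True then show ?thesis
      using emeasure_to_measure[OF r True] radon_pos_nonneg[OF r] by (simp add: measure_def)
  qed (simp add: measure_notin_sets radon_pos_not_borel[OF r])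
qed

lemma finite_measure_to_measure: "radon_pos m \<Longrightarrow> finite_measure (to_measure m)"
  by (rule finite_measureI) (simp add: emeasure_to_measure)

lemma radon_pos_mono:
  assumes r: "radon_pos m" and "C \<subseteq> B" "B \<in> sets borel" "C \<in> sets borel"
  shows "m C \<le> m B"
proof -
  interpret finite_measure "to_measure m" by (rule finite_measure_to_measure[OF r])
  have "measure (to_measure m) C \<le> measure (to_measure m) B"
    using assms by (intro finite_measure_mono) auto
  then show ?thesis by (simp add: measure_to_measure[OF r])
qed

lemma radon_pos_inner:
  fixes m :: "'a::t2_space set \<Rightarrow> real"
  assumes r: "radon_pos m" and B: "B \<in> sets borel" and e: "0 < e"
  shows "\<exists>C. compact C \<and> C \<subseteq> B \<and> m B < m C + e"
proof -
  let ?K = "{C. compact C \<and> C \<subseteq> B}"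
  have "m B = (SUP C\<in>?K. m C)" using r B by (auto simp: radon_pos_def)
  then have lt: "m B - e < (SUP C\<in>?K. m C)" using e by simp
  have bdd: "bdd_above (m ` ?K)"
    by (rule bdd_aboveI[of _ "m B"]) (use radon_pos_mono[OF r] B borel_compact in blast)
  have ne: "?K \<noteq> {}" by auto
  obtain C where "C \<in> ?K" "m B - e < m C"
    using less_cSUP_iff[OF ne bdd, THEN iffD1, OF lt] by blast
  then show ?thesis by auto
qed

lemma radon_posI:
  fixes m :: "'a::t2_space set \<Rightarrow> real"
  assumes z: "\<And>B. B \<notin> sets borel \<Longrightarrow> m B = 0"
    and nn: "\<And>B. B \<in> sets borel \<Longrightarrow> 0 \<le> m B"
    and ca: "real_countably_additive m"
    and mono: "\<And>B C. C \<subseteq> B \<Longrightarrow> B \<in> sets borel \<Longrightarrow> C \<in> sets borel \<Longrightarrow> m C \<le> m B"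
    and inner: "\<And>B e. B \<in> sets borel \<Longrightarrow> 0 < e \<Longrightarrow> \<exists>C. compact C \<and> C \<subseteq> B \<and> m B < m C + e"
  shows "radon_pos m"
  unfolding radon_pos_def
proof (intro conjI allI impI ballI)
  fix B :: "'a set" assume B: "B \<in> sets borel"
  have bdd: "bdd_above (m ` {C. compact C \<and> C \<subseteq> B})"
    by (rule bdd_aboveI[of _ "m B"]) (use mono B borel_compact in blast)
  show "m B = (SUP C\<in>{C. compact C \<and> C \<subseteq> B}. m C)"
  proof (rule antisym)
    show "m B \<le> (SUP C\<in>{C. compact C \<and> C \<subseteq> B}. m C)"
    proof (rule field_le_epsilon)
      fix e :: real assume "0 < e"
      then obtain C where C: "compact C" "C \<subseteq> B" "m B < m C + e"
        using inner B by blast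
      have "m C \<le> (SUP C\<in>{C. compact C \<and> C \<subseteq> B}. m C)"
        using C bdd by (intro cSUP_upper) blast+
      then show "m B \<le> (SUP C\<in>{C. compact C \<and> C \<subseteq> B}. m C) + e" using C by simp
    qed
    show "(SUP C\<in>{C. compact C \<and> C \<subseteq> B}. m C) \<le> m B"
      using mono B borel_compact by (intro cSUP_least) blast+
  qed
qed (use z nn ca in auto)

definition compact_inner_regular :: "'a::topological_space measure \<Rightarrow> bool" where
  "compact_inner_regular N \<longleftrightarrow>
     (\<forall>B\<in>sets borel. \<forall>e>0. \<exists>C. compact C \<and> C \<subseteq> B \<and> measure N B < measure N C + e)"

definition radon_measure :: "'a::topological_space measure \<Rightarrow> bool" where
  "radon_measure N \<longleftrightarrow> finite_measure N \<and> sets N = sets borel \<and> compact_inner_regular N"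

lemma radon_measureD:
  assumes "radon_measure N"
  shows "finite_measure N" "sets N = sets borel"
  using assms by (simp_all add: radon_measure_def)

lemma radon_measure_inner:
  assumes "radon_measure N" "B \<in> sets borel" "0 < e"
  shows "\<exists>C. compact C \<and> C \<subseteq> B \<and> measure N B < measure N C + e"
  using assms unfolding radon_measure_def compact_inner_regular_def by blast

lemma space_radon_measure: "radon_measure N \<Longrightarrow> space N = UNIV"
  unfolding radon_measure_def by (metis sets_eq_imp_space_eq space_borel)

lemma radon_measure_to_measure:
  fixes m :: "'a::t2_space set \<Rightarrow> real"
  assumes r: "radon_pos m" shows "radon_measure (to_measure m)"
  using radon_pos_inner[OF r] finite_measure_to_measure[OF r]
  by (simp add: radon_measure_def compact_inner_regular_def measure_to_measure[OF r])

lemma radon_pos_measure: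
  fixes N :: "'a::t2_space measure"
  assumes R: "radon_measure N" shows "radon_pos (measure N)"
proof (rule radon_posI)
  interpret finite_measure N by (rule radon_measureD[OF R])
  have S: "sets N = sets borel" by (rule radon_measureD[OF R])
  show "real_countably_additive (measure N)" unfolding real_countably_additive_def
    using S by (auto intro: finite_measure_UNION)
  show "measure N C \<le> measure N B" if "C \<subseteq> B" "B \<in> sets borel" "C \<in> sets borel" for B C
    using that S by (intro finite_measure_mono) auto
  show "measure N B = 0" if "B \<notin> sets borel" for B
    using that S by (simp add: measure_notin_sets)
qed (use radon_measure_inner[OF R] in auto)

lemma to_measure_measure:
  assumes R: "radon_measure N" shows "to_measure (measure N) = N"
proof -
  interpret finite_measure N by (rule radon_measureD[OF R])
  have S: "sets N = sets borel" by (rule radon_measureD[OF R])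
  have "to_measure (measure N) = measure_of (space N) (sets N) (emeasure N)"
    unfolding to_measure_def S space_radon_measure[OF R]
    by (rule measure_of_eq) (auto simp: emeasure_eq_measure S)
  then show ?thesis by (simp add: measure_of_of_measure)
qed

lemma radon_measure_compact_exhaustion:
  fixes N :: "'a::t2_space measure"
  assumes R: "radon_measure N" and B: "B \<in> sets borel"
  obtains K where "\<And>n. compact (K n)" "\<And>n. K n \<subseteq> B" "incseq K" "B - (\<Union>n. K n) \<in> null_sets N"
proof -
  interpret finite_measure N by (rule radon_measureD[OF R])
  have S: "sets N = sets borel" by (rule radon_measureD[OF R])
  have "\<forall>n::nat. \<exists>C. compact C \<and> C \<subseteq> B \<and> measure N B < measure N C + inverse (real (Suc n))"
    using radon_measure_inner[OF R B] by simp
  then obtain C where C: "\<And>n. compact (C n)" "\<And>n. C n \<subseteq> B"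
      "\<And>n. measure N B < measure N (C n) + inverse (real (Suc n))"
    by metis
  have Cs: "C n \<in> sets N" for n using C S by (simp add: borel_compact)
  define K where "K n = (\<Union>i\<le>n. C i)" for n
  have Kc: "compact (K n)" for n unfolding K_def by (intro compact_UN) (auto simp: C)
  have KB: "K n \<subseteq> B" for n unfolding K_def using C by auto
  have inc: "incseq K" unfolding K_def incseq_def by (intro allI impI UN_mono) auto
  let ?L = "B - (\<Union>n. K n)"
  have Ls: "?L \<in> sets N" using B Kc S by (auto intro: borel_compact)
  have "measure N ?L \<le> inverse (real (Suc n))" for n
  proof -
    have "measure N ?L \<le> measure N (B - C n)"
      using B Cs S by (intro finite_measure_mono) (auto simp: K_def)
    also have "\<dots> = measure N B - measure N (C n)"
      using B Cs S C(2) by (intro finite_measure_Diff) auto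
    finally show ?thesis using C(3)[of n] by simp
  qed
  then have "measure N ?L \<le> 0"
    by (intro LIMSEQ_le_const[OF LIMSEQ_inverse_real_of_nat]) auto
  then have "?L \<in> null_sets N"
    using Ls measure_nonneg[of N ?L] by (simp add: emeasure_eq_measure null_sets_def antisym)
  then show ?thesis using that Kc KB inc by blast
qed

lemma emeasure_density_real:
  assumes k: "integrable N k" "\<And>x. 0 \<le> k x" and A: "A \<in> sets N"
  shows "emeasure (density N (\<lambda>x. ennreal (k x))) A = ennreal (\<integral>x. indicator A x * k x \<partial>N)"
proof -
  have km: "k \<in> borel_measurable N" using k by auto
  have "emeasure (density N (\<lambda>x. ennreal (k x))) A = (\<integral>\<^sup>+x. ennreal (k x) * indicator A x \<partial>N)"
    using emeasure_density[OF _ A, of "\<lambda>x. ennreal (k x)"] km by simp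
  also have "\<dots> = (\<integral>\<^sup>+x. ennreal (indicator A x * k x) \<partial>N)"
    by (auto intro!: nn_integral_cong split: split_indicator)
  also have "\<dots> = ennreal (\<integral>x. indicator A x * k x \<partial>N)"
    by (rule nn_integral_eq_integral) (use integrable_mult_indicator[OF A k(1)] k(2) in auto)
  finally show ?thesis .
qed

lemma measure_density_real:
  assumes k: "integrable N k" "\<And>x. 0 \<le> k x" and A: "A \<in> sets N"
  shows "measure (density N (\<lambda>x. ennreal (k x))) A = (\<integral>x. indicator A x * k x \<partial>N)"
proof -
  have "0 \<le> (\<integral>x. indicator A x * k x \<partial>N)" using k(2) by (intro integral_nonneg_AE) auto
  then show ?thesis using emeasure_density_real[OF k A] by (simp add: measure_def)
qed

lemma finite_measure_density_real:
  assumes k: "integrable N k" "\<And>x. 0 \<le> k x"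
  shows "finite_measure (density N (\<lambda>x. ennreal (k x)))"
  by (rule finite_measureI) (simp add: emeasure_density_real[OF k])

lemma radon_measure_density:
  fixes N :: "'a::t2_space measure"
  assumes R: "radon_measure N" and k: "integrable N k" "\<And>x. 0 \<le> k x"
  shows "radon_measure (density N (\<lambda>x. ennreal (k x)))"
proof -
  let ?Nd = "density N (\<lambda>x. ennreal (k x))"
  interpret Nd: finite_measure ?Nd by (rule finite_measure_density_real[OF k])
  have S: "sets N = sets borel" by (rule radon_measureD[OF R])
  have "compact_inner_regular ?Nd" unfolding compact_inner_regular_def
  proof (intro ballI allI impI)
    fix B :: "'a set" and e :: real assume B: "B \<in> sets borel" and e: "0 < e"
    obtain K where Kc: "\<And>n. compact (K n)" and KB: "\<And>n. K n \<subseteq> B" and inc: "incseq K"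
      and null: "B - (\<Union>n. K n) \<in> null_sets N"
      using radon_measure_compact_exhaustion[OF R B] by blast
    have Ks: "K n \<in> sets N" for n using Kc S by (simp add: borel_compact)
    have "(\<lambda>n. measure ?Nd (B - K n)) \<longlonglongrightarrow> measure ?Nd (\<Inter>n. B - K n)"
      using B Ks S inc
        by (intro Nd.finite_Lim_measure_decseq) (auto simp: decseq_def incseq_def, blast)
    moreover have "measure ?Nd (\<Inter>n. B - K n) = 0"
    proof -
      have eq: "(\<Inter>n. B - K n) = B - (\<Union>n. K n)" by blast
      have "(\<Inter>n. B - K n) \<in> null_sets ?Nd" unfolding eq using null AE_not_in[OF null] k(1)
        by (subst null_sets_density_iff) (auto elim!: eventually_mono)
      then show ?thesis by (simp add: measure_def null_setsD1)
    qed
    ultimately have "(\<lambda>n. measure ?Nd (B - K n)) \<longlonglongrightarrow> 0" by simp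
    then have "eventually (\<lambda>n. measure ?Nd (B - K n) < e) sequentially"
      using e by (rule order_tendstoD)
    then obtain n where "measure ?Nd (B - K n) < e" by (auto dest: eventually_happens)
    moreover have "measure ?Nd B = measure ?Nd (K n) + measure ?Nd (B - K n)"
      using B Ks KB S by (subst Nd.finite_measure_Diff) auto
    ultimately show "\<exists>C. compact C \<and> C \<subseteq> B \<and> measure ?Nd B < measure ?Nd C + e"
      using Kc KB by (intro exI[of _ "K n"]) auto
  qed
  then show ?thesis unfolding radon_measure_def using S Nd.finite_measure_axioms by simp
qed

section \<open>Signed measures with a density\<close>

definition signed_density :: "'a::topological_space measure \<Rightarrow> ('a \<Rightarrow> real) \<Rightarrow> 'a set \<Rightarrow> real"
  where
  "signed_density N h B = (if B \<in> sets borel then (\<integral>x. indicator B x * h x \<partial>N) else 0)"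

lemma integrable_indicator_mult:
  "A \<in> sets N \<Longrightarrow> integrable N (f :: 'a \<Rightarrow> real) \<Longrightarrow> integrable N (\<lambda>x. indicator A x * f x)"
  using integrable_mult_indicator[of A N f] by simp

lemma integrable_mult_bounded:
  fixes h f :: "'a \<Rightarrow> real"
  assumes h: "integrable N h" and f: "f \<in> borel_measurable N" and c: "\<And>x. \<bar>f x\<bar> \<le> c"
  shows "integrable N (\<lambda>x. h x * f x)"
proof (rule Bochner_Integration.integrable_bound[of N "\<lambda>x. c * \<bar>h x\<bar>"])
  show "integrable N (\<lambda>x. c * \<bar>h x\<bar>)" using h by auto
  show "(\<lambda>x. h x * f x) \<in> borel_measurable N" using h f by auto
  show "AE x in N. norm (h x * f x) \<le> norm (c * \<bar>h x\<bar>)"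
  proof (rule AE_I2)
    fix x
    have "\<bar>h x * f x\<bar> = \<bar>h x\<bar> * \<bar>f x\<bar>" by (simp add: abs_mult)
    also have "\<dots> \<le> \<bar>h x\<bar> * \<bar>c\<bar>" using c[of x] by (intro mult_left_mono) auto
    also have "\<dots> = norm (c * \<bar>h x\<bar>)" by (simp add: abs_mult mult.commute)
    finally show "norm (h x * f x) \<le> norm (c * \<bar>h x\<bar>)" by simp
  qed
qed

lemma integrable_pos_part: "integrable N h \<Longrightarrow> integrable N (\<lambda>x. max 0 (h x) :: real)"
  by (intro integrable_max) auto

lemma integrable_neg_part: "integrable N h \<Longrightarrow> integrable N (\<lambda>x. max 0 (- h x) :: real)"
  by (intro integrable_max) auto

lemma signed_density_eq_density:
  assumes S: "sets N = sets borel" and k: "integrable N k" "\<And>x. 0 \<le> k x"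
  shows "signed_density N k = measure (density N (\<lambda>x. ennreal (k x)))"
proof
  fix B show "signed_density N k B = measure (density N (\<lambda>x. ennreal (k x))) B"
    using S measure_density_real[OF k, of B] by (auto simp: signed_density_def measure_notin_sets)
qed

lemma signed_density_diff:
  assumes S: "sets N = sets borel" and h1: "integrable N h1" and h2: "integrable N h2"
  shows "(\<lambda>B. signed_density N h1 B - signed_density N h2 B) = signed_density N (\<lambda>x. h1 x - h2 x)"
proof
  fix B show "signed_density N h1 B - signed_density N h2 B = signed_density N (\<lambda>x. h1 x - h2 x) B"
  proof (cases "B \<in> sets borel")
    case True
    have "(\<integral>x. indicator B x * h1 x \<partial>N) - (\<integral>x. indicator B x * h2 x \<partial>N)
        = (\<integral>x. indicator B x * h1 x - indicator B x * h2 x \<partial>N)"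
      using True S
      by (intro Bochner_Integration.integral_diff[symmetric] integrable_indicator_mult h1 h2) auto
    also have "\<dots> = (\<integral>x. indicator B x * (h1 x - h2 x) \<partial>N)"
      by (simp add: algebra_simps)
    finally show ?thesis using True by (simp add: signed_density_def)
  qed (simp add: signed_density_def)
qed

lemma signed_density_MK:
  fixes N :: "'a::t2_space measure"
  assumes R: "radon_measure N" and h: "integrable N h"
  shows "signed_density N h \<in> MK"
proof -
  have S: "sets N = sets borel" by (rule radon_measureD[OF R])
  have r1: "radon_pos (signed_density N (\<lambda>x. max 0 (h x)))"
    unfolding signed_density_eq_density[OF S integrable_pos_part[OF h] max.cobounded1]
    by (intro radon_pos_measure radon_measure_density[OF R] integrable_pos_part h) auto
  have r2: "radon_pos (signed_density N (\<lambda>x. max 0 (- h x)))"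
    unfolding signed_density_eq_density[OF S integrable_neg_part[OF h] max.cobounded1]
    by (intro radon_pos_measure radon_measure_density[OF R] integrable_neg_part h) auto
  have "signed_density N h = (\<lambda>B. signed_density N (\<lambda>x. max 0 (h x)) B
      - signed_density N (\<lambda>x. max 0 (- h x)) B)"
    by (simp add: signed_density_diff[OF S integrable_pos_part[OF h] integrable_neg_part[OF h]])
      (rule arg_cong[where f = "signed_density N"], auto simp: max_def)
  then show ?thesis unfolding MK_def using r1 r2 by blast
qed

lemma signed_density_uminus: "(\<lambda>B. - signed_density N h B) = signed_density N (\<lambda>x. - h x)"
  by (auto simp: signed_density_def fun_eq_iff)

lemma pos_var_signed_density:
  assumes S: "sets N = sets borel" and h: "integrable N h"
  shows "pos_var (signed_density N h) = signed_density N (\<lambda>x. max 0 (h x))"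
proof
  fix B :: "'a set"
  show "pos_var (signed_density N h) B = signed_density N (\<lambda>x. max 0 (h x)) B"
  proof (cases "B \<in> sets borel")
    case B: True
    have hm: "h \<in> borel_measurable borel" using h S
      by (metis borel_measurable_integrable measurable_cong_sets)
    let ?C0 = "B \<inter> {x. 0 < h x}"
    have C0: "?C0 \<in> sets borel" using hm B by measurable
    have le: "signed_density N h C \<le> signed_density N (\<lambda>x. max 0 (h x)) B"
      if C: "C \<in> sets borel" "C \<subseteq> B" for C
    proof -
      have "signed_density N h C = (\<integral>x. indicator C x * h x \<partial>N)"
        using C by (simp add: signed_density_def)
      also have "\<dots> \<le> (\<integral>x. indicator B x * max 0 (h x) \<partial>N)"
        using C B S by (intro integral_mono integrable_indicator_mult integrable_pos_part h)
          (auto split: split_indicator)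
      finally show ?thesis using B by (simp add: signed_density_def)
    qed
    have eq: "signed_density N h ?C0 = signed_density N (\<lambda>x. max 0 (h x)) B"
      using C0 B by (simp add: signed_density_def)
        (rule Bochner_Integration.integral_cong; auto split: split_indicator)
    have "pos_var (signed_density N h) B = Sup (signed_density N h ` {C \<in> sets borel. C \<subseteq> B})"
      using B by (simp add: pos_var_def)
    also have "\<dots> = signed_density N (\<lambda>x. max 0 (h x)) B"
      by (rule cSup_eq_maximum) (use le eq C0 in \<open>auto intro!: image_eqI[where x = ?C0]\<close>)
    finally show ?thesis .
  qed (simp add: signed_density_def pos_var_def)
qed

lemma neg_var_signed_density:
  assumes S: "sets N = sets borel" and h: "integrable N h"
  shows "neg_var (signed_density N h) = signed_density N (\<lambda>x. max 0 (- h x))"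
  using pos_var_signed_density[OF S integrable_minus[OF h]]
  by (simp add: neg_var_def signed_density_uminus)

lemma tot_var_signed_density:
  assumes S: "sets N = sets borel" and h: "integrable N h"
  shows "tot_var (signed_density N h) B = signed_density N (\<lambda>x. \<bar>h x\<bar>) B"
proof (cases "B \<in> sets borel")
  case True
  have "tot_var (signed_density N h) B
      = (\<integral>x. indicator B x * max 0 (h x) \<partial>N) + (\<integral>x. indicator B x * max 0 (- h x) \<partial>N)"
    using True
    by (simp add: tot_var_def pos_var_signed_density[OF S h] neg_var_signed_density[OF S h]
        signed_density_def)
  also have "\<dots> = (\<integral>x. indicator B x * max 0 (h x) + indicator B x * max 0 (- h x) \<partial>N)"
    using True S by (intro Bochner_Integration.integral_add[symmetric] integrable_indicator_mult
        integrable_pos_part integrable_neg_part h) auto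
  also have "\<dots> = (\<integral>x. indicator B x * \<bar>h x\<bar> \<partial>N)"
    by (intro Bochner_Integration.integral_cong) (auto split: split_indicator)
  finally show ?thesis using True by (simp add: signed_density_def)
qed (simp add: tot_var_def pos_var_def neg_var_def signed_density_def)

lemma sint_signed_density:
  fixes N :: "'a::t2_space measure"
  assumes R: "radon_measure N" and h: "integrable N h"
    and f: "f \<in> borel_measurable borel" and c: "\<And>x. \<bar>f x\<bar> \<le> c"
  shows "sint (signed_density N h) f = (\<integral>x. h x * f x \<partial>N)"
proof -
  have S: "sets N = sets borel" by (rule radon_measureD[OF R])
  have fN: "f \<in> borel_measurable N" using f S by (metis measurable_cong_sets)
  have hm: "h \<in> borel_measurable N" using h by auto
  have tm: "to_measure (signed_density N k) = density N (\<lambda>x. ennreal (k x))"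
    if k: "integrable N k" "\<And>x. 0 \<le> k x" for k
    unfolding signed_density_eq_density[OF S k]
    by (rule to_measure_measure[OF radon_measure_density[OF R k]])
  have i1: "integral\<^sup>L (to_measure (signed_density N (\<lambda>x. max 0 (h x)))) f
      = (\<integral>x. max 0 (h x) * f x \<partial>N)"
    unfolding tm[OF integrable_pos_part[OF h] max.cobounded1]
    by (subst integral_density) (use fN hm in auto)
  have i2: "integral\<^sup>L (to_measure (signed_density N (\<lambda>x. max 0 (- h x)))) f
      = (\<integral>x. max 0 (- h x) * f x \<partial>N)"
    unfolding tm[OF integrable_neg_part[OF h] max.cobounded1]
    by (subst integral_density) (use fN hm in auto)
  have "sint (signed_density N h) f
      = (\<integral>x. max 0 (h x) * f x \<partial>N) - (\<integral>x. max 0 (- h x) * f x \<partial>N)"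
    unfolding sint_def pos_var_signed_density[OF S h] neg_var_signed_density[OF S h] i1 i2 ..
  also have "\<dots> = (\<integral>x. max 0 (h x) * f x - max 0 (- h x) * f x \<partial>N)"
    by (intro Bochner_Integration.integral_diff[symmetric] integrable_mult_bounded[OF _ fN c]
        integrable_pos_part integrable_neg_part h)
  also have "\<dots> = (\<integral>x. h x * f x \<partial>N)"
    by (intro Bochner_Integration.integral_cong) (auto simp: max_def algebra_simps)
  finally show ?thesis .
qed

lemma radon_pos_add:
  fixes m1 m2 :: "'a::t2_space set \<Rightarrow> real"
  assumes r1: "radon_pos m1" and r2: "radon_pos m2"
  shows "radon_pos (\<lambda>B. m1 B + m2 B)"
proof (rule radon_posI)
  show "real_countably_additive (\<lambda>B. m1 B + m2 B)"
    unfolding real_countably_additive_def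
  proof (intro allI impI)
    fix A :: "nat \<Rightarrow> 'a set" assume "range A \<subseteq> sets borel" "disjoint_family A"
    then have "(\<lambda>i. m1 (A i)) sums m1 (\<Union>(range A))" "(\<lambda>i. m2 (A i)) sums m2 (\<Union>(range A))"
      using radon_pos_countably_additive[OF r1] radon_pos_countably_additive[OF r2]
      unfolding real_countably_additive_def by simp_all
    then show "(\<lambda>i. m1 (A i) + m2 (A i)) sums (m1 (\<Union>(range A)) + m2 (\<Union>(range A)))"
      by (rule sums_add)
  qed
  show "m1 C + m2 C \<le> m1 B + m2 B" if "C \<subseteq> B" "B \<in> sets borel" "C \<in> sets borel" for B C
    using radon_pos_mono[OF r1 that] radon_pos_mono[OF r2 that] by simp
  show "\<exists>C. compact C \<and> C \<subseteq> B \<and> m1 B + m2 B < m1 C + m2 C + e"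
    if B: "B \<in> sets borel" and e: "0 < e" for B e
  proof -
    obtain C1 where C1: "compact C1" "C1 \<subseteq> B" "m1 B < m1 C1 + e/2"
      using radon_pos_inner[OF r1 B half_gt_zero[OF e]] by blast
    obtain C2 where C2: "compact C2" "C2 \<subseteq> B" "m2 B < m2 C2 + e/2"
      using radon_pos_inner[OF r2 B half_gt_zero[OF e]] by blast
    have "m1 C1 \<le> m1 (C1 \<union> C2)" using C1 C2
      by (intro radon_pos_mono[OF r1]) (auto intro: borel_compact)
    moreover have "m2 C2 \<le> m2 (C1 \<union> C2)" using C1 C2
      by (intro radon_pos_mono[OF r2]) (auto intro: borel_compact)
    ultimately show ?thesis using C1 C2 by (intro exI[of _ "C1 \<union> C2"]) auto
  qed
qed (simp_all add: radon_pos_not_borel[OF r1] radon_pos_not_borel[OF r2]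
    radon_pos_nonneg[OF r1] radon_pos_nonneg[OF r2])

lemma radon_pos_zero: "radon_pos (\<lambda>B::'a::t2_space set. 0)"
proof (rule radon_posI)
  show "real_countably_additive (\<lambda>B::'a set. 0)" by (simp add: real_countably_additive_def)
  show "\<exists>C. compact C \<and> C \<subseteq> B \<and> (0::real) < 0 + e" if "0 < e" for B and e :: real
    using that by (intro exI[of _ "{}"]) simp
qed simp_all

lemma radon_pos_scale:
  fixes m :: "'a::t2_space set \<Rightarrow> real"
  assumes r: "radon_pos m" and c: "0 \<le> c"
  shows "radon_pos (\<lambda>B. c * m B)"
proof (cases "c = 0")
  case True then show ?thesis using radon_pos_zero by simp
next
  case False
  then have c': "0 < c" using c by simp
  show ?thesis
  proof (rule radon_posI)
    show "real_countably_additive (\<lambda>B. c * m B)"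
      unfolding real_countably_additive_def
    proof (intro allI impI)
      fix A :: "nat \<Rightarrow> 'a set" assume "range A \<subseteq> sets borel" "disjoint_family A"
      then have "(\<lambda>i. m (A i)) sums m (\<Union>(range A))"
        using radon_pos_countably_additive[OF r] unfolding real_countably_additive_def by simp
      then show "(\<lambda>i. c * m (A i)) sums (c * m (\<Union>(range A)))" by (rule sums_mult)
    qed
    show "c * m C \<le> c * m B" if "C \<subseteq> B" "B \<in> sets borel" "C \<in> sets borel" for B C
      using radon_pos_mono[OF r that] c by (rule mult_left_mono)
    show "\<exists>C. compact C \<and> C \<subseteq> B \<and> c * m B < c * m C + e"
      if B: "B \<in> sets borel" and e: "0 < e" for B e
    proof -
      obtain C where C: "compact C" "C \<subseteq> B" "m B < m C + e / c"
        using radon_pos_inner[OF r B divide_pos_pos[OF e c']] by blast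
      have "c * m B < c * (m C + e / c)" using C(3) c' by (rule mult_strict_left_mono)
      also have "\<dots> = c * m C + e" using c' by (simp add: distrib_left)
      finally show ?thesis using C by blast
    qed
  qed (simp_all add: radon_pos_not_borel[OF r] radon_pos_nonneg[OF r] c)
qed

lemma radon_pos_sum:
  fixes m :: "'b \<Rightarrow> 'a::t2_space set \<Rightarrow> real"
  assumes "finite F" "\<And>t. t \<in> F \<Longrightarrow> radon_pos (m t)"
  shows "radon_pos (\<lambda>B. \<Sum>t\<in>F. m t B)"
  using assms by (induction F rule: finite_induct) (auto intro: radon_pos_zero radon_pos_add)

lemma radon_pos_dirac: "radon_pos (dirac (t :: 'a::t2_space))"
proof (rule radon_posI)
  show "real_countably_additive (dirac t)" unfolding real_countably_additive_def
  proof (intro allI impI)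
    fix A :: "nat \<Rightarrow> 'a set" assume A: "range A \<subseteq> sets borel" "disjoint_family A"
    then have U: "(\<Union>(range A)) \<in> sets borel" by auto
    show "(\<lambda>i. dirac t (A i)) sums dirac t (\<Union>(range A))"
    proof (cases "\<exists>j. t \<in> A j")
      case True
      then obtain j where j: "t \<in> A j" by auto
      have "dirac t (A i) = (if i = j then 1 else 0)" for i
        using A j by (auto simp: dirac_def disjoint_family_on_def)
      moreover have "dirac t (\<Union>(range A)) = 1" using U j by (auto simp: dirac_def)
      ultimately show ?thesis using sums_single[of j "\<lambda>_. 1::real"] by simp
    next
      case False
      then show ?thesis using U by (simp add: dirac_def)
    qed
  qed
  show "\<exists>C. compact C \<and> C \<subseteq> B \<and> dirac t B < dirac t C + e" if "B \<in> sets borel" "0 < e" for B e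
  proof (cases "t \<in> B")
    case True then show ?thesis using that
      by (intro exI[of _ "{t}"]) (auto simp: dirac_def borel_compact)
  next
    case False then show ?thesis using that by (intro exI[of _ "{}"]) (auto simp: dirac_def)
  qed
qed (auto simp: dirac_def)

lemma dirac_sum_MK:
  fixes c :: "'a::t2_space \<Rightarrow> real"
  assumes F: "finite F"
  shows "(\<lambda>B. \<Sum>t\<in>F. c t * dirac t B) \<in> MK"
proof -
  have r1: "radon_pos (\<lambda>B. \<Sum>t\<in>F. max 0 (c t) * dirac t B)"
    using F by (intro radon_pos_sum radon_pos_scale radon_pos_dirac) auto
  have r2: "radon_pos (\<lambda>B. \<Sum>t\<in>F. max 0 (- c t) * dirac t B)"
    using F by (intro radon_pos_sum radon_pos_scale radon_pos_dirac) auto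
  have "(\<lambda>B. \<Sum>t\<in>F. c t * dirac t B)
      = (\<lambda>B. (\<Sum>t\<in>F. max 0 (c t) * dirac t B) - (\<Sum>t\<in>F. max 0 (- c t) * dirac t B))"
    by (auto simp: fun_eq_iff sum_subtractf[symmetric] intro!: sum.cong simp: max_def algebra_simps)
  then show ?thesis unfolding MK_def using r1 r2 by blast
qed

lemma dirac_sum_MK_pos_span:
  fixes c :: "'a::t2_space \<Rightarrow> real"
  assumes F: "finite F" and c: "\<And>t. t \<in> F \<Longrightarrow> 0 \<le> c t"
  shows "(\<lambda>B. \<Sum>t\<in>F. c t * dirac t B) \<in> MK_pos \<inter> span_Delta"
  using dirac_sum_MK[OF F, of c] F c unfolding MK_pos_def span_Delta_def
  by (auto intro!: sum_nonneg simp: dirac_def)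

lemma co_Delta_subset_MK_pos: "co_Delta \<subseteq> (MK_pos :: ('a::t2_space set \<Rightarrow> real) set)"
  unfolding co_Delta_def using dirac_sum_MK_pos_span by blast

lemma radon_pos_eq_signed_density:
  fixes N :: "'a::t2_space measure"
  assumes R: "radon_measure N" and r: "radon_pos m" and le: "\<And>B. m B \<le> measure N B"
  shows "\<exists>k. integrable N k \<and> (\<forall>x. 0 \<le> k x) \<and> m = signed_density N k"
proof -
  interpret finite_measure N by (rule radon_measureD[OF R])
  have S: "sets N = sets borel" by (rule radon_measureD[OF R])
  let ?M = "to_measure m"
  interpret M: finite_measure ?M by (rule finite_measure_to_measure[OF r])
  have SM: "sets ?M = sets N" using S by simp
  have ac: "absolutely_continuous N ?M"
    unfolding absolutely_continuous_def
  proof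
    fix A assume A: "A \<in> null_sets N"
    then have As: "A \<in> sets borel" using S by auto
    have "measure N A = 0" using A by (simp add: measure_def null_setsD1)
    then have "m A \<le> 0" using le[of A] by simp
    then have "m A = 0" using radon_pos_nonneg[OF r, of A] by simp
    then show "A \<in> null_sets ?M" using As emeasure_to_measure[OF r As] by (intro null_setsI) auto
  qed
  obtain k where k: "k \<in> borel_measurable N" "AE x in N. RN_deriv N ?M x = ennreal (k x)"
      "\<And>x. 0 \<le> k x"
    using real_RN_deriv[OF M.finite_measure_axioms ac SM] by blast
  have dRN: "density N (RN_deriv N ?M) = ?M"
    by (rule density_RN_deriv[OF ac SM])
  have "density N (\<lambda>x. ennreal (k x)) = density N (RN_deriv N ?M)"
  proof (rule density_cong)
    show "(\<lambda>x. ennreal (k x)) \<in> borel_measurable N" using k(1) by simp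
    show "RN_deriv N ?M \<in> borel_measurable N" by simp
    show "AE x in N. ennreal (k x) = RN_deriv N ?M x" using k(2) by (simp add: eq_commute)
  qed
  then have dk: "density N (\<lambda>x. ennreal (k x)) = ?M" using dRN by simp
  have "(\<integral>\<^sup>+x. ennreal (k x) \<partial>N) = emeasure (density N (\<lambda>x. ennreal (k x))) (space N)"
    using k by (simp add: emeasure_density)
  also have "\<dots> < \<infinity>" using dk by (simp add: M.emeasure_real less_top[symmetric])
  finally have ki: "integrable N k" using k by (intro integrableI_nonneg) auto
  have "m = measure ?M" using measure_to_measure[OF r] by simp
  also have "\<dots> = signed_density N k" using signed_density_eq_density[OF S ki k(3)] dk by simp
  finally show ?thesis using ki k(3) by blast
qed

lemma MK_common_signed_density:
  fixes \<nu> \<mu> :: "'a::t2_space set \<Rightarrow> real"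
  assumes "\<nu> \<in> MK" "\<mu> \<in> MK"
  obtains N h s where "radon_measure N" "integrable N h" "integrable N s"
    "\<nu> = signed_density N h" "\<mu> = signed_density N s"
proof -
  obtain m1 m2 where m12: "radon_pos m1" "radon_pos m2" "\<nu> = (\<lambda>B. m1 B - m2 B)"
    using assms(1) by (auto simp: MK_def)
  obtain m3 m4 where m34: "radon_pos m3" "radon_pos m4" "\<mu> = (\<lambda>B. m3 B - m4 B)"
    using assms(2) by (auto simp: MK_def)
  define l where "l = (\<lambda>B. m1 B + m2 B + (m3 B + m4 B))"
  have rl: "radon_pos l" unfolding l_def using m12 m34 by (intro radon_pos_add) auto
  define N where "N = to_measure l"
  have R: "radon_measure N" unfolding N_def by (rule radon_measure_to_measure[OF rl])
  have S: "sets N = sets borel" by (rule radon_measureD[OF R])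
  have rep: "\<exists>k. integrable N k \<and> m = signed_density N k" if "radon_pos m" "\<And>B. m B \<le> l B" for m
    using radon_pos_eq_signed_density[OF R that(1)] that(2)
    by (auto simp: N_def measure_to_measure[OF rl])
  have le: "m1 B \<le> l B" "m2 B \<le> l B" "m3 B \<le> l B" "m4 B \<le> l B" for B
    using m12 m34 radon_pos_nonneg[of m1 B] radon_pos_nonneg[of m2 B] radon_pos_nonneg[of m3 B]
      radon_pos_nonneg[of m4 B] by (auto simp: l_def)
  obtain k1 where k1: "integrable N k1" "m1 = signed_density N k1" using rep[OF m12(1) le(1)]
    by blast
  obtain k2 where k2: "integrable N k2" "m2 = signed_density N k2" using rep[OF m12(2) le(2)]
    by blast
  obtain k3 where k3: "integrable N k3" "m3 = signed_density N k3" using rep[OF m34(1) le(3)]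
    by blast
  obtain k4 where k4: "integrable N k4" "m4 = signed_density N k4" using rep[OF m34(2) le(4)]
    by blast
  show ?thesis
  proof (rule that[OF R])
    show "\<nu> = signed_density N (\<lambda>x. k1 x - k2 x)"
      using m12(3) k1 k2 signed_density_diff[OF S k1(1) k2(1)] by simp
    show "\<mu> = signed_density N (\<lambda>x. k3 x - k4 x)"
      using m34(3) k3 k4 signed_density_diff[OF S k3(1) k4(1)] by simp
  qed (use k1 k2 k3 k4 in auto)
qed

lemma MK_signed_density:
  fixes \<mu> :: "'a::t2_space set \<Rightarrow> real"
  assumes "\<mu> \<in> MK"
  obtains N h where "radon_measure N" "integrable N h" "\<mu> = signed_density N h"
  using MK_common_signed_density[OF assms assms] that by blast

lemma AE_nonneg_on_if_signed_density_nonneg: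
  assumes S: "sets N = sets borel" and h: "integrable N h" and A: "A \<in> sets borel"
    and nonneg: "\<And>E. E \<in> sets borel \<Longrightarrow> E \<subseteq> A \<Longrightarrow> 0 \<le> signed_density N h E"
  shows "AE x in N. x \<in> A \<longrightarrow> 0 \<le> h x"
proof -
  have "h \<in> borel_measurable borel"
    using h S by (metis borel_measurable_integrable measurable_cong_sets)
  then have E: "A \<inter> {x. h x < 0} \<in> sets borel" using A by measurable
  let ?u = "\<lambda>x. - (indicator (A \<inter> {x. h x < 0}) x * h x)"
  have "0 \<le> (\<integral>x. ?u x \<partial>N)" by (rule integral_nonneg_AE) (auto split: split_indicator)
  moreover have "(\<integral>x. ?u x \<partial>N) \<le> 0" using nonneg[OF E] E by (simp add: signed_density_def)
  ultimately have "(\<integral>x. ?u x \<partial>N) = 0" by simp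
  then have "AE x in N. ?u x = 0"
    using E S by (subst integral_nonneg_eq_0_iff_AE[symmetric])
      (auto intro!: integrable_indicator_mult h split: split_indicator)
  then show ?thesis by eventually_elim (auto simp: indicator_def)
qed

lemma AE_nonneg_if_signed_density_nonneg:
  assumes S: "sets N = sets borel" and h: "integrable N h"
    and nonneg: "\<And>B. 0 \<le> signed_density N h B"
  shows "AE x in N. 0 \<le> h x"
  using AE_nonneg_on_if_signed_density_nonneg[OF S h, of UNIV] nonneg by simp

lemma AE_zero_if_signed_density_vanishes:
  assumes S: "sets N = sets borel" and h: "integrable N h" and A: "A \<in> sets borel"
    and zero: "\<And>E. E \<in> sets borel \<Longrightarrow> E \<subseteq> A \<Longrightarrow> signed_density N h E = 0"
  shows "AE x in N. x \<in> A \<longrightarrow> h x = 0"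
proof -
  have "AE x in N. x \<in> A \<longrightarrow> 0 \<le> h x"
    by (rule AE_nonneg_on_if_signed_density_nonneg[OF S h A]) (simp add: zero)
  moreover have "AE x in N. x \<in> A \<longrightarrow> 0 \<le> - h x"
    by (rule AE_nonneg_on_if_signed_density_nonneg[OF S integrable_minus[OF h] A])
      (simp add: zero signed_density_uminus[symmetric])
  ultimately show ?thesis by eventually_elim auto
qed

section \<open>Continuous functions on a compact Hausdorff space\<close>

lemma Hausdorff_space_euclidean_t2: "Hausdorff_space (euclidean :: 'a::t2_space topology)"
  unfolding Hausdorff_space_def disjnt_def using hausdorff by fastforce

lemma Urysohn_compact_t2:
  fixes C D :: "'a::t2_space set"
  assumes K: "compact (UNIV :: 'a set)" and C: "closed C" and D: "closed D" and dj: "C \<inter> D = {}"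
  obtains g :: "'a \<Rightarrow> real" where "continuous_on UNIV g" "\<And>x. 0 \<le> g x \<and> g x \<le> 1"
    "\<And>x. x \<in> C \<Longrightarrow> g x = 1" "\<And>x. x \<in> D \<Longrightarrow> g x = 0"
proof -
  have "compact_space (euclidean :: 'a topology)"
    using K by (simp add: compact_space_def compactin_euclidean_iff)
  then have "normal_space (euclidean :: 'a topology)"
    using Hausdorff_space_euclidean_t2 compact_Hausdorff_or_regular_imp_normal_space by blast
  moreover have "closedin euclidean D" "closedin euclidean C" "disjnt D C"
    using C D dj by (auto simp: disjnt_def)
  ultimately obtain f where f: "continuous_map euclidean (top_of_set {0..1::real}) f"
    "f ` D \<subseteq> {0}" "f ` C \<subseteq> {1}"
    using Urysohn_lemma[OF _ _ _ _ zero_le_one] by metis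
  have "continuous_map euclidean euclidean f" "f ` UNIV \<subseteq> {0..1}"
    using f(1) continuous_map_in_subtopology[of euclidean euclidean "{0..1::real}" f] by auto
  then have "continuous_on UNIV f" "\<And>x. 0 \<le> f x \<and> f x \<le> 1"
    by (auto simp: continuous_map_iff_continuous2 image_subset_iff)
  moreover have "\<And>x. x \<in> C \<Longrightarrow> f x = 1" "\<And>x. x \<in> D \<Longrightarrow> f x = 0" using f(2,3) by auto
  ultimately show ?thesis by (rule that)
qed

lemma continuous_on_UNIV_bounded:
  fixes g :: "'a::topological_space \<Rightarrow> real"
  assumes K: "compact (UNIV :: 'a set)" and g: "continuous_on UNIV g"
  obtains c where "\<And>x. \<bar>g x\<bar> \<le> c"
proof -
  have "bounded (range g)" using compact_continuous_image[OF g K] by (simp add: compact_imp_bounded)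
  then show ?thesis using that by (auto simp: bounded_iff)
qed

lemma continuous_on_UNIV_measurable:
  fixes g :: "'a::topological_space \<Rightarrow> real"
  shows "continuous_on UNIV g \<Longrightarrow> sets N = sets borel \<Longrightarrow> g \<in> borel_measurable N"
  using borel_measurable_continuous_onI measurable_cong_sets by blast

lemma integrable_continuous_on_UNIV:
  fixes g :: "'a::topological_space \<Rightarrow> real"
  assumes K: "compact (UNIV :: 'a set)" and F: "finite_measure N" and S: "sets N = sets borel"
    and g: "continuous_on UNIV g"
  shows "integrable N g"
proof -
  obtain c where "\<And>x. \<bar>g x\<bar> \<le> c" using continuous_on_UNIV_bounded[OF K g] by blast
  then show ?thesis using continuous_on_UNIV_measurable[OF g S]
    by (intro finite_measure.integrable_const_bound[OF F, of _ c]) auto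
qed

lemma integrable_continuous_mult:
  fixes g :: "'a::topological_space \<Rightarrow> real"
  assumes K: "compact (UNIV :: 'a set)" and S: "sets N = sets borel"
    and h: "integrable N h" and g: "continuous_on UNIV g"
  shows "integrable N (\<lambda>x. g x * h x)"
proof -
  obtain c where "\<And>x. \<bar>g x\<bar> \<le> c" using continuous_on_UNIV_bounded[OF K g] by blast
  then have "integrable N (\<lambda>x. h x * g x)"
    by (rule integrable_mult_bounded[OF h continuous_on_UNIV_measurable[OF g S]])
  then show ?thesis by (simp add: mult.commute)
qed

definition L1_limit_of_continuous :: "'a::topological_space measure \<Rightarrow> ('a \<Rightarrow> real) \<Rightarrow> bool" where
  "L1_limit_of_continuous N f \<longleftrightarrow> (\<forall>e>0. \<exists>g. continuous_on UNIV g \<and> (\<integral>x. \<bar>g x - f x\<bar> \<partial>N) < e)"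

lemma L1_approx_indicator_by_continuous:
  fixes N :: "'a::t2_space measure"
  assumes K: "compact (UNIV :: 'a set)" and R: "radon_measure N"
    and A: "A \<in> sets borel" and e: "0 < e"
  obtains g :: "'a \<Rightarrow> real" where "continuous_on UNIV g" "\<And>x. 0 \<le> g x \<and> g x \<le> 1"
    "(\<integral>x. \<bar>g x - indicator A x\<bar> \<partial>N) < e"
proof -
  interpret finite_measure N by (rule radon_measureD[OF R])
  have S: "sets N = sets borel" by (rule radon_measureD[OF R])
  have A': "- A \<in> sets borel" using A by auto
  obtain C where C: "compact C" "C \<subseteq> A" "measure N A < measure N C + e/2"
    using radon_measure_inner[OF R A, of "e/2"] e by auto
  obtain D where D: "compact D" "D \<subseteq> - A" "measure N (- A) < measure N D + e/2"
    using radon_measure_inner[OF R A', of "e/2"] e by auto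
  have Cs: "C \<in> sets N" and Ds: "D \<in> sets N" using C D S by (auto intro: borel_compact)
  obtain g :: "'a \<Rightarrow> real" where g: "continuous_on UNIV g" "\<And>x. 0 \<le> g x \<and> g x \<le> 1"
      "\<And>x. x \<in> C \<Longrightarrow> g x = 1" "\<And>x. x \<in> D \<Longrightarrow> g x = 0"
    using Urysohn_compact_t2[OF K compact_imp_closed[OF C(1)] compact_imp_closed[OF D(1)]] C(2) D(2)
    by blast
  have bnd: "\<bar>g x - indicator A x\<bar> \<le> indicator (A - C) x + indicator (- A - D) x" for x
    using g(2)[of x] g(3)[of x] g(4)[of x] C(2) D(2) by (auto simp: indicator_def)
  have i1: "integrable N (\<lambda>x. indicator (A - C) x :: real)"
    and i2: "integrable N (\<lambda>x. indicator (- A - D) x :: real)"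
    and i3: "integrable N (\<lambda>x. \<bar>g x - indicator A x\<bar>)"
    using A Cs Ds S integrable_continuous_on_UNIV[OF K finite_measure_axioms S g(1)]
    by (auto simp: emeasure_eq_measure)
  have "(\<integral>x. \<bar>g x - indicator A x\<bar> \<partial>N) \<le> (\<integral>x. indicator (A - C) x + indicator (- A - D) x \<partial>N)"
    by (rule integral_mono[OF i3 Bochner_Integration.integrable_add[OF i1 i2] bnd])
  also have "\<dots> = measure N (A - C) + measure N (- A - D)"
    using A Cs A' Ds S by (subst Bochner_Integration.integral_add[OF i1 i2]) simp
  also have "\<dots> = (measure N A - measure N C) + (measure N (- A) - measure N D)"
    using A A' Cs Ds C(2) D(2) S by (simp add: finite_measure_Diff)
  also have "\<dots> < e" using C(3) D(3) by simp
  finally show ?thesis using g that by blast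
qed

lemma integral_abs_diff_triangle:
  fixes a b c :: "'a \<Rightarrow> real"
  assumes "integrable N a" "integrable N b" "integrable N c"
  shows "(\<integral>x. \<bar>a x - c x\<bar> \<partial>N) \<le> (\<integral>x. \<bar>a x - b x\<bar> \<partial>N) + (\<integral>x. \<bar>b x - c x\<bar> \<partial>N)"
proof -
  have "(\<integral>x. \<bar>a x - c x\<bar> \<partial>N) \<le> (\<integral>x. \<bar>a x - b x\<bar> + \<bar>b x - c x\<bar> \<partial>N)"
    using assms by (intro integral_mono) auto
  also have "\<dots> = (\<integral>x. \<bar>a x - b x\<bar> \<partial>N) + (\<integral>x. \<bar>b x - c x\<bar> \<partial>N)"
    using assms by (intro Bochner_Integration.integral_add) auto
  finally show ?thesis .
qed

lemma L1_limit_of_continuous_indicator: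
  fixes N :: "'a::t2_space measure"
  assumes K: "compact (UNIV :: 'a set)" and R: "radon_measure N" and A: "A \<in> sets N"
  shows "L1_limit_of_continuous N (\<lambda>x. indicator A x *\<^sub>R c)"
  unfolding L1_limit_of_continuous_def
proof (intro allI impI)
  fix e :: real assume e: "0 < e"
  have A': "A \<in> sets borel" using A radon_measureD(2)[OF R] by simp
  obtain g :: "'a \<Rightarrow> real" where g: "continuous_on UNIV g"
    and err: "(\<integral>x. \<bar>g x - indicator A x\<bar> \<partial>N) < e / (\<bar>c\<bar> + 1)"
    using L1_approx_indicator_by_continuous[OF K R A', of "e / (\<bar>c\<bar> + 1)"] e by auto
  have "(\<integral>x. \<bar>g x * c - indicator A x *\<^sub>R c\<bar> \<partial>N) = (\<integral>x. \<bar>c\<bar> * \<bar>g x - indicator A x\<bar> \<partial>N)"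
    by (intro Bochner_Integration.integral_cong)
      (auto simp: abs_mult[symmetric] right_diff_distrib mult.commute)
  also have "\<dots> = \<bar>c\<bar> * (\<integral>x. \<bar>g x - indicator A x\<bar> \<partial>N)" by simp
  also have "\<dots> \<le> \<bar>c\<bar> * (e / (\<bar>c\<bar> + 1))" using err by (intro mult_left_mono) auto
  also have "\<dots> < e" using e by (simp add: field_simps)
  finally show "\<exists>g. continuous_on UNIV g \<and> (\<integral>x. \<bar>g x - indicator A x *\<^sub>R c\<bar> \<partial>N) < e"
    using g by (intro exI[of _ "\<lambda>x. g x * c"]) (auto intro: continuous_intros)
qed

lemma L1_limit_of_continuous_add:
  fixes N :: "'a::topological_space measure"
  assumes K: "compact (UNIV :: 'a set)" and R: "radon_measure N"
    and f1: "integrable N f1" "L1_limit_of_continuous N f1"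
    and f2: "integrable N f2" "L1_limit_of_continuous N f2"
  shows "L1_limit_of_continuous N (\<lambda>x. f1 x + f2 x)"
  unfolding L1_limit_of_continuous_def
proof (intro allI impI)
  fix e :: real assume e: "0 < e"
  obtain g1 where g1: "continuous_on UNIV g1" "(\<integral>x. \<bar>g1 x - f1 x\<bar> \<partial>N) < e/2"
    using f1(2) e unfolding L1_limit_of_continuous_def by (meson half_gt_zero)
  obtain g2 where g2: "continuous_on UNIV g2" "(\<integral>x. \<bar>g2 x - f2 x\<bar> \<partial>N) < e/2"
    using f2(2) e unfolding L1_limit_of_continuous_def by (meson half_gt_zero)
  have "integrable N g1" "integrable N g2"
    using g1(1) g2(1) integrable_continuous_on_UNIV[OF K radon_measureD[OF R]] by auto
  then have "(\<integral>x. \<bar>(g1 x + g2 x) - (f1 x + f2 x)\<bar> \<partial>N)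
      \<le> (\<integral>x. \<bar>g1 x - f1 x\<bar> + \<bar>g2 x - f2 x\<bar> \<partial>N)"
    using f1(1) f2(1) by (intro integral_mono) auto
  also have "\<dots> = (\<integral>x. \<bar>g1 x - f1 x\<bar> \<partial>N) + (\<integral>x. \<bar>g2 x - f2 x\<bar> \<partial>N)"
    using \<open>integrable N g1\<close> \<open>integrable N g2\<close> f1(1) f2(1)
    by (intro Bochner_Integration.integral_add) auto
  also have "\<dots> < e" using g1 g2 by simp
  finally show "\<exists>g. continuous_on UNIV g \<and> (\<integral>x. \<bar>g x - (f1 x + f2 x)\<bar> \<partial>N) < e"
    using g1(1) g2(1) by (intro exI[of _ "\<lambda>x. g1 x + g2 x"]) (auto intro: continuous_intros)
qed

lemma L1_limit_of_continuous_closed: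
  fixes N :: "'a::topological_space measure"
  assumes K: "compact (UNIV :: 'a set)" and R: "radon_measure N"
    and f: "integrable N f"
    and approx: "\<And>e. 0 < e \<Longrightarrow>
      \<exists>s. integrable N s \<and> L1_limit_of_continuous N s \<and> (\<integral>x. \<bar>s x - f x\<bar> \<partial>N) < e"
  shows "L1_limit_of_continuous N f"
  unfolding L1_limit_of_continuous_def
proof (intro allI impI)
  fix e :: real assume e: "0 < e"
  obtain s where s: "integrable N s" "L1_limit_of_continuous N s" "(\<integral>x. \<bar>s x - f x\<bar> \<partial>N) < e/2"
    using approx[of "e/2"] e by auto
  obtain g where g: "continuous_on UNIV g" "(\<integral>x. \<bar>g x - s x\<bar> \<partial>N) < e/2"
    using s(2) e unfolding L1_limit_of_continuous_def by (meson half_gt_zero)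
  have "integrable N g" using integrable_continuous_on_UNIV[OF K radon_measureD[OF R] g(1)] .
  then have "(\<integral>x. \<bar>g x - f x\<bar> \<partial>N) \<le> (\<integral>x. \<bar>g x - s x\<bar> \<partial>N) + (\<integral>x. \<bar>s x - f x\<bar> \<partial>N)"
    using s(1) f by (rule integral_abs_diff_triangle)
  also have "\<dots> < e" using g(2) s(3) by simp
  finally show "\<exists>g. continuous_on UNIV g \<and> (\<integral>x. \<bar>g x - f x\<bar> \<partial>N) < e" using g(1) by blast
qed

lemma L1_limit_of_continuous_integrable:
  fixes N :: "'a::t2_space measure"
  assumes K: "compact (UNIV :: 'a set)" and R: "radon_measure N" and f: "integrable N f"
  shows "L1_limit_of_continuous N f"
  using f
proof (induct rule: integrable_induct)
  case (base A c)
  show ?case by (rule L1_limit_of_continuous_indicator[OF K R base(1)])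
next
  case (add f1 f2)
  then show ?case by (intro L1_limit_of_continuous_add[OF K R])
next
  case (lim f s)
  have L1: "(\<lambda>i. \<integral>x. \<bar>s i x - f x\<bar> \<partial>N) \<longlonglongrightarrow> (\<integral>x. 0 \<partial>N)"
  proof (rule integral_dominated_convergence[where w = "\<lambda>x. 3 * \<bar>f x\<bar>"])
    show "AE x in N. (\<lambda>i. \<bar>s i x - f x\<bar>) \<longlonglongrightarrow> 0"
    proof (rule AE_I2)
      fix x assume "x \<in> space N"
      then have "(\<lambda>i. s i x - f x) \<longlonglongrightarrow> 0" using lim(3) by (simp add: LIM_zero)
      then show "(\<lambda>i. \<bar>s i x - f x\<bar>) \<longlonglongrightarrow> 0" by (rule tendsto_rabs_zero)
    qed
    show "AE x in N. norm \<bar>s i x - f x\<bar> \<le> 3 * \<bar>f x\<bar>" for i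
    proof (rule AE_I2)
      fix x assume "x \<in> space N"
      then have "\<bar>s i x\<bar> \<le> 2 * \<bar>f x\<bar>" using lim(4) by simp
      then show "norm \<bar>s i x - f x\<bar> \<le> 3 * \<bar>f x\<bar>" by simp
    qed
  qed (use lim(1,5) in auto)
  have "\<exists>s'. integrable N s' \<and> L1_limit_of_continuous N s' \<and> (\<integral>x. \<bar>s' x - f x\<bar> \<partial>N) < e"
    if "0 < e" for e
  proof -
    have "eventually (\<lambda>i. (\<integral>x. \<bar>s i x - f x\<bar> \<partial>N) < e) sequentially"
      using L1 that by (intro order_tendstoD) auto
    then obtain i where "(\<integral>x. \<bar>s i x - f x\<bar> \<partial>N) < e" by (auto dest: eventually_happens)
    then show ?thesis using lim(1,2) by blast
  qed
  then show ?case by (rule L1_limit_of_continuous_closed[OF K R lim(5)])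
qed

lemma sint_signed_density_continuous:
  fixes N :: "'a::t2_space measure"
  assumes K: "compact (UNIV :: 'a set)" and R: "radon_measure N" and h: "integrable N h"
    and f: "continuous_on UNIV f"
  shows "sint (signed_density N h) f = (\<integral>x. h x * f x \<partial>N)"
proof -
  obtain c where "\<And>x. \<bar>f x\<bar> \<le> c" using continuous_on_UNIV_bounded[OF K f] by blast
  then show ?thesis by (rule sint_signed_density[OF R h borel_measurable_continuous_onI[OF f]])
qed

lemma sint_nonneg:
  fixes \<mu> :: "'a::t2_space set \<Rightarrow> real"
  assumes K: "compact (UNIV :: 'a set)" and \<mu>: "\<mu> \<in> MK_pos"
    and f: "continuous_on UNIV f" and f_nonneg: "\<And>x. 0 \<le> f x"
  shows "0 \<le> sint \<mu> f"
proof -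
  obtain N h where R: "radon_measure N" and h: "integrable N h" and \<mu>_eq: "\<mu> = signed_density N h"
    using MK_signed_density[of \<mu>] \<mu> by (auto simp: MK_pos_def)
  have "AE x in N. 0 \<le> h x"
    using AE_nonneg_if_signed_density_nonneg[OF radon_measureD(2)[OF R] h] \<mu> \<mu>_eq
    by (auto simp: MK_pos_def)
  then have "0 \<le> (\<integral>x. h x * f x \<partial>N)"
    by (intro integral_nonneg_AE) (auto simp: f_nonneg elim!: eventually_mono)
  then show ?thesis unfolding \<mu>_eq sint_signed_density_continuous[OF K R h f] .
qed

text \<open>Approximate the indicator of a Borel set in \<open>L\<^sup>1(|\<mu>|)\<close> by continuous functions with
  values in [0, 1].\<close>

lemma MK_posI_sint_nonneg:
  fixes \<mu> :: "'a::t2_space set \<Rightarrow> real"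
  assumes K: "compact (UNIV :: 'a set)" and \<mu>: "\<mu> \<in> MK"
    and nonneg: "\<And>f. continuous_on UNIV f \<Longrightarrow> (\<And>x. 0 \<le> f x) \<Longrightarrow> 0 \<le> sint \<mu> f"
  shows "\<mu> \<in> MK_pos"
proof -
  obtain N h where R: "radon_measure N" and h: "integrable N h" and \<mu>_eq: "\<mu> = signed_density N h"
    using MK_signed_density[OF \<mu>] by blast
  have S: "sets N = sets borel" by (rule radon_measureD[OF R])
  let ?Nh = "density N (\<lambda>x. ennreal \<bar>h x\<bar>)"
  have Rh: "radon_measure ?Nh" using radon_measure_density[OF R, of "\<lambda>x. \<bar>h x\<bar>"] h by simp
  have "0 \<le> \<mu> B + e" if B: "B \<in> sets borel" and e: "0 < e" for B e
  proof -
    obtain g :: "'a \<Rightarrow> real" where g: "continuous_on UNIV g" "\<And>x. 0 \<le> g x \<and> g x \<le> 1"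
      and err: "(\<integral>x. \<bar>g x - indicator B x\<bar> \<partial>?Nh) < e"
      using L1_approx_indicator_by_continuous[OF K Rh B e] by blast
    have d: "(\<lambda>x. g x - indicator B x) \<in> borel_measurable N" "\<And>x. \<bar>g x - indicator B x\<bar> \<le> 1"
      using continuous_on_UNIV_measurable[OF g(1) S] B S g(2) by (auto simp: indicator_def)
    have i: "integrable N (\<lambda>x. h x * (g x - indicator B x))"
      by (rule integrable_mult_bounded[OF h d])
    have "0 \<le> (\<integral>x. h x * g x \<partial>N)"
      using nonneg[OF g(1)] g(2) sint_signed_density_continuous[OF K R h g(1)] \<mu>_eq by simp
    also have "\<dots> = (\<integral>x. indicator B x * h x + h x * (g x - indicator B x) \<partial>N)"
      by (rule Bochner_Integration.integral_cong) (auto simp: algebra_simps)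
    also have "\<dots> = \<mu> B + (\<integral>x. h x * (g x - indicator B x) \<partial>N)"
      using B S integrable_indicator_mult[of B N h] h i
      by (subst Bochner_Integration.integral_add) (auto simp: \<mu>_eq signed_density_def)
    also have "(\<integral>x. h x * (g x - indicator B x) \<partial>N) \<le> (\<integral>x. \<bar>h x\<bar> * \<bar>g x - indicator B x\<bar> \<partial>N)"
      using integral_norm_bound[of N "\<lambda>x. h x * (g x - indicator B x)"] by (simp add: abs_mult)
    also have "\<dots> = (\<integral>x. \<bar>g x - indicator B x\<bar> \<partial>?Nh)"
      using d(1) h by (subst integral_density) auto
    finally show ?thesis using err by simp
  qed
  then have "0 \<le> \<mu> B" for B
    by (cases "B \<in> sets borel") (auto intro: field_le_epsilon simp: \<mu>_eq signed_density_def)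
  then show ?thesis using \<mu> by (simp add: MK_pos_def)
qed

lemma wstar_limit_MK_pos:
  fixes \<mu> :: "'a::t2_space set \<Rightarrow> real"
  assumes K: "compact (UNIV :: 'a set)" and s: "\<And>n. s n \<in> MK_pos" and \<mu>: "\<mu> \<in> MK"
    and conv: "wstar_conv s \<mu>"
  shows "\<mu> \<in> MK_pos"
proof (rule MK_posI_sint_nonneg[OF K \<mu>])
  fix f :: "'a \<Rightarrow> real" assume f: "continuous_on UNIV f" and f_nonneg: "\<And>x. 0 \<le> f x"
  have "(\<lambda>n. sint (s n) f) \<longlonglongrightarrow> sint \<mu> f" using conv f by (simp add: wstar_conv_def)
  then show "0 \<le> sint \<mu> f" by (rule LIMSEQ_le_const) (use sint_nonneg[OF K s f f_nonneg] in auto)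
qed

section \<open>Multiplying a measure by a continuous function\<close>

definition mult_measure :: "('a::topological_space \<Rightarrow> real) \<Rightarrow> ('a set \<Rightarrow> real) \<Rightarrow> 'a set \<Rightarrow> real" where
  "mult_measure g \<mu> B = (if B \<in> sets borel then sint \<mu> (\<lambda>x. g x * indicator B x) else 0)"

lemma mult_measure_signed_density:
  fixes N :: "'a::t2_space measure"
  assumes R: "radon_measure N" and h: "integrable N h"
    and g: "g \<in> borel_measurable borel" and c: "\<And>x. \<bar>g x\<bar> \<le> c"
  shows "mult_measure g (signed_density N h) = signed_density N (\<lambda>x. g x * h x)"
proof
  fix B :: "'a set"
  show "mult_measure g (signed_density N h) B = signed_density N (\<lambda>x. g x * h x) B"
  proof (cases "B \<in> sets borel")
    case B: True
    have "(\<lambda>x. g x * indicator B x) \<in> borel_measurable borel" using g B by measurable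
    moreover have "\<bar>g x * indicator B x\<bar> \<le> c" for x using c[of x] by (cases "x \<in> B") auto
    ultimately have "sint (signed_density N h) (\<lambda>x. g x * indicator B x)
        = (\<integral>x. h x * (g x * indicator B x) \<partial>N)"
      by (rule sint_signed_density[OF R h])
    also have "\<dots> = (\<integral>x. indicator B x * (g x * h x) \<partial>N)"
      by (rule Bochner_Integration.integral_cong) (simp_all add: mult_ac)
    finally show ?thesis using B by (simp add: mult_measure_def signed_density_def)
  qed (simp add: mult_measure_def signed_density_def)
qed

lemma mult_measure_signed_density_continuous:
  fixes N :: "'a::t2_space measure"
  assumes K: "compact (UNIV :: 'a set)" and R: "radon_measure N" and h: "integrable N h"
    and g: "continuous_on UNIV g"
  shows "mult_measure g (signed_density N h) = signed_density N (\<lambda>x. g x * h x)"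
proof -
  obtain c where "\<And>x. \<bar>g x\<bar> \<le> c" using continuous_on_UNIV_bounded[OF K g] by blast
  then show ?thesis
    by (rule mult_measure_signed_density[OF R h borel_measurable_continuous_onI[OF g]])
qed

lemma mult_measure_MK:
  fixes \<mu> :: "'a::t2_space set \<Rightarrow> real"
  assumes K: "compact (UNIV :: 'a set)" and \<mu>: "\<mu> \<in> MK" and g: "continuous_on UNIV g"
  shows "mult_measure g \<mu> \<in> MK"
proof -
  obtain N h where R: "radon_measure N" and h: "integrable N h" and "\<mu> = signed_density N h"
    using MK_signed_density[OF \<mu>] by blast
  then show ?thesis
    using signed_density_MK[OF R integrable_continuous_mult[OF K radon_measureD(2)[OF R] h g]]
    by (simp add: mult_measure_signed_density_continuous[OF K R h g])
qed

lemma sint_mult_measure: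
  fixes \<mu> :: "'a::t2_space set \<Rightarrow> real"
  assumes K: "compact (UNIV :: 'a set)" and \<mu>: "\<mu> \<in> MK"
    and g: "continuous_on UNIV g" and f: "continuous_on UNIV f"
  shows "sint (mult_measure g \<mu>) f = sint \<mu> (\<lambda>x. g x * f x)"
proof -
  obtain N h where R: "radon_measure N" and h: "integrable N h" and \<mu>_eq: "\<mu> = signed_density N h"
    using MK_signed_density[OF \<mu>] by blast
  have gf: "continuous_on UNIV (\<lambda>x. g x * f x)" using g f by (intro continuous_intros)
  have gh: "integrable N (\<lambda>x. g x * h x)"
    by (rule integrable_continuous_mult[OF K radon_measureD(2)[OF R] h g])
  have "sint (mult_measure g \<mu>) f = (\<integral>x. (g x * h x) * f x \<partial>N)"
    unfolding \<mu>_eq mult_measure_signed_density_continuous[OF K R h g]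
    by (rule sint_signed_density_continuous[OF K R gh f])
  also have "\<dots> = (\<integral>x. h x * (g x * f x) \<partial>N)"
    by (rule Bochner_Integration.integral_cong) (simp_all add: mult_ac)
  also have "\<dots> = sint \<mu> (\<lambda>x. g x * f x)"
    unfolding \<mu>_eq by (rule sint_signed_density_continuous[OF K R h gf, symmetric])
  finally show ?thesis .
qed

lemma wstar_conv_mult_measure:
  fixes \<mu> :: "'a::t2_space set \<Rightarrow> real"
  assumes K: "compact (UNIV :: 'a set)" and s: "\<And>n. s n \<in> MK" and \<mu>: "\<mu> \<in> MK"
    and conv: "wstar_conv s \<mu>" and g: "continuous_on UNIV g"
  shows "wstar_conv (\<lambda>n. mult_measure g (s n)) (mult_measure g \<mu>)"
  unfolding wstar_conv_def
proof (intro allI impI)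
  fix f :: "'a \<Rightarrow> real" assume f: "continuous_on UNIV f"
  have "continuous_on UNIV (\<lambda>x. g x * f x)" using g f by (intro continuous_intros)
  then have "(\<lambda>n. sint (s n) (\<lambda>x. g x * f x)) \<longlonglongrightarrow> sint \<mu> (\<lambda>x. g x * f x)"
    using conv by (simp add: wstar_conv_def)
  then show "(\<lambda>n. sint (mult_measure g (s n)) f) \<longlonglongrightarrow> sint (mult_measure g \<mu>) f"
    by (simp add: sint_mult_measure[OF K _ g f] s \<mu>)
qed

lemma signed_density_finite_support:
  fixes N :: "'a::t2_space measure"
  assumes S: "sets N = sets borel" and h: "integrable N h" and F: "finite F"
    and null: "AE x in N. x \<notin> F \<longrightarrow> h x = 0"
  shows "signed_density N h = (\<lambda>B. \<Sum>t\<in>F. signed_density N h {t} * dirac t B)"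
proof
  fix B :: "'a set"
  have sing: "{t} \<in> sets N" for t :: 'a using S by (simp add: borel_closed)
  show "signed_density N h B = (\<Sum>t\<in>F. signed_density N h {t} * dirac t B)"
  proof (cases "B \<in> sets borel")
    case B: True
    have "signed_density N h B = (\<integral>x. indicator B x * h x \<partial>N)" using B
      by (simp add: signed_density_def)
    also have "\<dots> = (\<integral>x. (\<Sum>t\<in>F \<inter> B. indicator {t} x * h x) \<partial>N)"
    proof (rule integral_cong_AE)
      show "AE x in N. indicator B x * h x = (\<Sum>t\<in>F \<inter> B. indicator {t} x * h x)"
        using null by eventually_elim (auto simp: indicator_def sum.If_cases F)
    qed (use B S h sing in auto)
    also have "\<dots> = (\<Sum>t\<in>F \<inter> B. signed_density N h {t})"
      using sing h by (subst Bochner_Integration.integral_sum)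
        (auto intro: integrable_indicator_mult simp: signed_density_def borel_closed)
    also have "\<dots> = (\<Sum>t\<in>F. signed_density N h {t} * dirac t B)"
      using F B by (simp add: sum.inter_restrict dirac_def if_distrib cong: if_cong)
    finally show ?thesis .
  qed (simp add: signed_density_def dirac_def)
qed

lemma signed_density_mult_singleton:
  "signed_density N (\<lambda>x. g x * h x) {t} = g t * signed_density N h {t}"
proof -
  have "(\<integral>x. indicator {t} x * (g x * h x) \<partial>N) = (\<integral>x. g t * (indicator {t} x * h x) \<partial>N)"
    by (rule Bochner_Integration.integral_cong) (auto simp: indicator_def)
  then show ?thesis by (simp add: signed_density_def)
qed

lemma signed_density_mult_dirac_sum:
  fixes N :: "'a::t2_space measure" and c g :: "'a \<Rightarrow> real"
  assumes S: "sets N = sets borel" and h: "integrable N h" and gh: "integrable N (\<lambda>x. g x * h x)"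
    and F: "finite F" and eq: "(\<lambda>B. \<Sum>t\<in>F. c t * dirac t B) = signed_density N h"
  shows "signed_density N (\<lambda>x. g x * h x) = (\<lambda>B. \<Sum>t\<in>F. (c t * g t) * dirac t B)"
proof -
  have Fc: "- F \<in> sets borel" using F by (simp add: borel_open finite_imp_closed open_Compl)
  have "AE x in N. x \<in> - F \<longrightarrow> h x = 0"
  proof (rule AE_zero_if_signed_density_vanishes[OF S h Fc])
    fix E assume "E \<in> sets borel" "E \<subseteq> - F"
    then have "(\<Sum>t\<in>F. c t * dirac t E) = 0" by (auto simp: dirac_def intro!: sum.neutral)
    then show "signed_density N h E = 0" using fun_cong[OF eq, of E] by simp
  qed
  then have null: "AE x in N. x \<notin> F \<longrightarrow> g x * h x = 0" by auto
  have single: "signed_density N h {t} = c t" if "t \<in> F" for t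
  proof -
    have "(\<Sum>s\<in>F. c s * dirac s {t}) = (\<Sum>s\<in>F. if s = t then c s else 0)"
      by (intro sum.cong) (auto simp: dirac_def borel_closed)
    then show ?thesis using fun_cong[OF eq, of "{t}"] F that by (simp add: sum.delta')
  qed
  have "signed_density N (\<lambda>x. g x * h x)
      = (\<lambda>B. \<Sum>t\<in>F. signed_density N (\<lambda>x. g x * h x) {t} * dirac t B)"
    by (rule signed_density_finite_support[OF S gh F null])
  also have "\<dots> = (\<lambda>B. \<Sum>t\<in>F. (c t * g t) * dirac t B)"
    by (intro ext sum.cong refl) (simp add: signed_density_mult_singleton single mult_ac)
  finally show ?thesis .
qed

lemma mult_measure_dirac_sum:
  fixes c g :: "'a::t2_space \<Rightarrow> real"
  assumes K: "compact (UNIV :: 'a set)" and F: "finite F" and g: "continuous_on UNIV g"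
  shows "mult_measure g (\<lambda>B. \<Sum>t\<in>F. c t * dirac t B) = (\<lambda>B. \<Sum>t\<in>F. (c t * g t) * dirac t B)"
proof -
  obtain N h where R: "radon_measure N" and h: "integrable N h"
    and eq: "(\<lambda>B. \<Sum>t\<in>F. c t * dirac t B) = signed_density N h"
    using MK_signed_density[OF dirac_sum_MK[OF F, of c]] by blast
  have S: "sets N = sets borel" by (rule radon_measureD[OF R])
  show ?thesis unfolding eq mult_measure_signed_density_continuous[OF K R h g]
    by (rule signed_density_mult_dirac_sum[OF S h integrable_continuous_mult[OF K S h g] F eq])
qed

section \<open>The transfinite sequential closures\<close>

lemma Seq_unfold:
  assumes wo: "Well_order r"
  shows "Seq r i A = (if Order_Relation.underS r i = {} then A
            else if (\<exists>j. imm_pred r j i) then seq_cl (Seq r (SOME j. imm_pred r j i) A)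
            else (\<Union>j\<in>Order_Relation.underS r i. Seq r j A))"
proof -
  have wf: "wf (r - Id)" using wo by (simp add: well_order_on_def)
  define F where "F = (\<lambda>S i. if Order_Relation.underS r i = {} then A
            else if (\<exists>j. imm_pred r j i) then seq_cl (S (SOME j. imm_pred r j i))
            else (\<Union>j\<in>Order_Relation.underS r i. S j))"
  have adm: "adm_wf (r - Id) F"
    unfolding adm_wf_def
  proof (intro allI impI)
    fix f g :: "'a \<Rightarrow> ('b set \<Rightarrow> real) set" and x
    assume fg: "\<forall>z. (z, x) \<in> r - Id \<longrightarrow> f z = g z"
    have U: "(\<Union>j\<in>Order_Relation.underS r x. f j) = (\<Union>j\<in>Order_Relation.underS r x. g j)"
      using fg by (auto simp: Order_Relation.underS_def)
    have P: "f (SOME j. imm_pred r j x) = g (SOME j. imm_pred r j x)" if "\<exists>j. imm_pred r j x"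
    proof -
      have "imm_pred r (SOME j. imm_pred r j x) x" using someI_ex[OF that] .
      then show ?thesis using fg by (auto simp: imm_pred_def)
    qed
    show "F f x = F g x" unfolding F_def using U P by simp
  qed
  have "Seq r i A = wfrec (r - Id) F i" unfolding Seq_def F_def ..
  also have "\<dots> = F (wfrec (r - Id) F) i" by (subst wfrec_fixpoint[OF wf adm]) rule
  also have "\<dots> = F (\<lambda>j. Seq r j A) i" unfolding Seq_def F_def ..
  finally show ?thesis unfolding F_def .
qed

lemma seq_clI: "\<nu> \<in> MK \<Longrightarrow> (\<And>n. s n \<in> A) \<Longrightarrow> wstar_conv s \<nu> \<Longrightarrow> \<nu> \<in> seq_cl A"
  unfolding seq_cl_def by blast

lemma imm_pred_unique:
  assumes wo: "Well_order r" and "imm_pred r j i" "imm_pred r j' i"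
  shows "j' = j"
proof -
  have "j \<in> Field r" "j' \<in> Field r" using assms(2,3) by (auto simp: imm_pred_def intro: FieldI1)
  then have "j = j' \<or> (j, j') \<in> r \<or> (j', j) \<in> r"
    using wo by (auto simp: well_order_on_def linear_order_on_def total_on_def)
  then show ?thesis using assms(2,3) unfolding imm_pred_def by blast
qed

lemma Seq_zero:
  assumes "Well_order r" "Order_Relation.underS r i = {}"
  shows "Seq r i A = A"
  unfolding Seq_unfold[OF assms(1), of i A] using assms(2) by simp

lemma Seq_succ:
  assumes wo: "Well_order r" and ji: "imm_pred r j i"
  shows "Seq r i A = seq_cl (Seq r j A)"
proof -
  have "j \<in> Order_Relation.underS r i" using ji
    by (auto simp: imm_pred_def Order_Relation.underS_def)
  moreover have "(SOME j. imm_pred r j i) = j"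
    using ji imm_pred_unique[OF wo ji] by (rule some_equality)
  ultimately show ?thesis unfolding Seq_unfold[OF wo, of i A] using ji by auto
qed

lemma Seq_limit:
  assumes "Well_order r" "Order_Relation.underS r i \<noteq> {}" "\<nexists>j. imm_pred r j i"
  shows "Seq r i A = (\<Union>j\<in>Order_Relation.underS r i. Seq r j A)"
  unfolding Seq_unfold[OF assms(1), of i A] using assms(2,3) by simp

lemma Seq_subset:
  assumes wo: "Well_order r" and A: "A \<subseteq> P"
    and closed: "\<And>s \<mu>. (\<And>n. s n \<in> P) \<Longrightarrow> \<mu> \<in> MK \<Longrightarrow> wstar_conv s \<mu> \<Longrightarrow> \<mu> \<in> P"
  shows "Seq r i A \<subseteq> P"
proof -
  have wf: "wf (r - Id)" using wo by (simp add: well_order_on_def)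
  show ?thesis
  using wf proof (induction i rule: wf_induct_rule)
    case (less i)
    consider "Order_Relation.underS r i = {}" | j where "imm_pred r j i"
      | "Order_Relation.underS r i \<noteq> {}" "\<nexists>j. imm_pred r j i" by blast
    then show ?case
    proof cases
      case 1
      then show ?thesis using A by (simp add: Seq_zero[OF wo 1])
    next
      case (2 j)
      then have IH: "Seq r j A \<subseteq> P" using less by (auto simp: imm_pred_def)
      show ?thesis unfolding Seq_succ[OF wo 2] seq_cl_def
      proof clarify
        fix \<mu> s assume "\<mu> \<in> MK" "\<forall>n. s n \<in> Seq r j A" "wstar_conv s \<mu>"
        then show "\<mu> \<in> P" using closed[of s \<mu>] IH by blast
      qed
    next
      case 3
      have "Seq r j A \<subseteq> P" if "j \<in> Order_Relation.underS r i" for j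
        using less that by (simp add: Order_Relation.underS_def)
      then show ?thesis unfolding Seq_limit[OF wo 3] by blast
    qed
  qed
qed

lemma Seq_image_subset:
  assumes wo: "Well_order r" and A: "A \<subseteq> MK" and base: "\<Phi> ` A \<subseteq> B"
    and lim: "\<And>s \<mu>. (\<And>n. s n \<in> MK) \<Longrightarrow> \<mu> \<in> MK \<Longrightarrow> wstar_conv s \<mu> \<Longrightarrow>
      \<Phi> \<mu> \<in> MK \<and> wstar_conv (\<lambda>n. \<Phi> (s n)) (\<Phi> \<mu>)"
  shows "\<Phi> ` Seq r i A \<subseteq> Seq r i B"
proof -
  have wf: "wf (r - Id)" using wo by (simp add: well_order_on_def)
  show ?thesis
    using wf
  proof (induction i rule: wf_induct_rule)
    case (less i)
    consider "Order_Relation.underS r i = {}" | j where "imm_pred r j i"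
      | "Order_Relation.underS r i \<noteq> {}" "\<nexists>j. imm_pred r j i" by blast
    then show ?case
    proof cases
      case 1
      then show ?thesis using base by (simp add: Seq_zero[OF wo 1])
    next
      case (2 j)
      have "(j, i) \<in> r - Id" using 2 by (auto simp: imm_pred_def)
      then have IH: "\<Phi> ` Seq r j A \<subseteq> Seq r j B" by (rule less)
      have "\<Phi> \<mu> \<in> seq_cl (Seq r j B)" if \<mu>_in: "\<mu> \<in> seq_cl (Seq r j A)" for \<mu>
      proof -
        obtain s where s: "\<And>n. s n \<in> Seq r j A" and \<mu>: "\<mu> \<in> MK" and conv: "wstar_conv s \<mu>"
          using \<mu>_in unfolding seq_cl_def by blast
        have "s n \<in> MK" for n using s Seq_subset[OF wo A, of j] by (auto simp: seq_cl_def)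
        then have "\<Phi> \<mu> \<in> MK" "wstar_conv (\<lambda>n. \<Phi> (s n)) (\<Phi> \<mu>)" using lim[OF _ \<mu> conv] by auto
        moreover have "\<Phi> (s n) \<in> Seq r j B" for n using IH s by blast
        ultimately show ?thesis by (intro seq_clI)
      qed
      then show ?thesis unfolding Seq_succ[OF wo 2] by blast
    next
      case 3
      have "\<Phi> ` Seq r j A \<subseteq> Seq r j B" if "j \<in> Order_Relation.underS r i" for j
        using less that by (simp add: Order_Relation.underS_def)
      then show ?thesis unfolding Seq_limit[OF wo 3] by blast
    qed
  qed
qed

lemma mult_measure_Seq:
  fixes g :: "'a::t2_space \<Rightarrow> real"
  assumes K: "compact (UNIV :: 'a set)" and wo: "Well_order r" and g: "continuous_on UNIV g"
  shows "mult_measure g ` Seq r i co_Delta \<subseteq> Seq r i span_Delta"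
    and "(\<And>x. 0 \<le> g x) \<Longrightarrow> mult_measure g ` Seq r i co_Delta \<subseteq> Seq r i (MK_pos \<inter> span_Delta)"
proof -
  have A: "(co_Delta :: ('a set \<Rightarrow> real) set) \<subseteq> MK"
    using co_Delta_subset_MK_pos unfolding MK_pos_def by blast
  have lim: "mult_measure g \<mu> \<in> MK \<and> wstar_conv (\<lambda>n. mult_measure g (s n)) (mult_measure g \<mu>)"
    if "\<And>n. s n \<in> MK" "\<mu> \<in> MK" "wstar_conv s \<mu>" for s \<mu>
    using mult_measure_MK[OF K that(2) g] wstar_conv_mult_measure[OF K that g] by blast
  have base: "mult_measure g \<mu> \<in> span_Delta \<and>
      ((\<forall>x. 0 \<le> g x) \<longrightarrow> mult_measure g \<mu> \<in> MK_pos \<inter> span_Delta)"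
    if \<mu>_in: "\<mu> \<in> co_Delta" for \<mu>
  proof -
    obtain F c where F: "finite F" and c: "\<And>t. t \<in> F \<Longrightarrow> 0 \<le> c t"
      and \<mu>_eq: "\<mu> = (\<lambda>B. \<Sum>t\<in>F. c t * dirac t B)"
      using \<mu>_in unfolding co_Delta_def by blast
    have eq: "mult_measure g \<mu> = (\<lambda>B. \<Sum>t\<in>F. (c t * g t) * dirac t B)"
      unfolding \<mu>_eq by (rule mult_measure_dirac_sum[OF K F g])
    have "mult_measure g \<mu> \<in> span_Delta" unfolding eq span_Delta_def using F
      by (intro CollectI exI[of _ F] exI[of _ "\<lambda>t. c t * g t"]) simp
    moreover have "mult_measure g \<mu> \<in> MK_pos \<inter> span_Delta" if g_nonneg: "\<forall>x. 0 \<le> g x"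
      unfolding eq using F c g_nonneg by (intro dirac_sum_MK_pos_span) auto
    ultimately show ?thesis by blast
  qed
  show "mult_measure g ` Seq r i co_Delta \<subseteq> Seq r i span_Delta"
    using base by (intro Seq_image_subset[OF wo A _ lim]) blast+
  show "mult_measure g ` Seq r i co_Delta \<subseteq> Seq r i (MK_pos \<inter> span_Delta)" if "\<And>x. 0 \<le> g x"
    using base that by (intro Seq_image_subset[OF wo A _ lim]) blast+
qed

section \<open>Absolutely continuous measures as weak* limits\<close>

lemma wstar_conv_signed_density:
  fixes N :: "'a::t2_space measure"
  assumes K: "compact (UNIV :: 'a set)" and R: "radon_measure N" and h: "integrable N h"
    and H: "\<And>n. integrable N (H n)" and L1: "(\<lambda>n. \<integral>x. \<bar>H n x - h x\<bar> \<partial>N) \<longlonglongrightarrow> 0"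
  shows "wstar_conv (\<lambda>n. signed_density N (H n)) (signed_density N h)"
  unfolding wstar_conv_def
proof (intro allI impI)
  fix f :: "'a \<Rightarrow> real" assume f: "continuous_on UNIV f"
  obtain c where c: "\<And>x. \<bar>f x\<bar> \<le> c" using continuous_on_UNIV_bounded[OF K f] by blast
  have fN: "f \<in> borel_measurable N"
    by (rule continuous_on_UNIV_measurable[OF f radon_measureD(2)[OF R]])
  have bound: "\<bar>sint (signed_density N (H n)) f - sint (signed_density N h) f\<bar>
      \<le> c * (\<integral>x. \<bar>H n x - h x\<bar> \<partial>N)" for n
  proof -
    have d: "integrable N (\<lambda>x. H n x - h x)" using H h by auto
    have "sint (signed_density N (H n)) f - sint (signed_density N h) f
        = (\<integral>x. H n x * f x \<partial>N) - (\<integral>x. h x * f x \<partial>N)"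
      using sint_signed_density_continuous[OF K R H f] sint_signed_density_continuous[OF K R h f]
      by simp
    also have "\<dots> = (\<integral>x. H n x * f x - h x * f x \<partial>N)"
      by (rule Bochner_Integration.integral_diff[symmetric,
            OF integrable_mult_bounded[OF H fN c] integrable_mult_bounded[OF h fN c]])
    also have "\<dots> = (\<integral>x. (H n x - h x) * f x \<partial>N)" by (simp add: left_diff_distrib)
    finally have "\<bar>sint (signed_density N (H n)) f - sint (signed_density N h) f\<bar>
        \<le> (\<integral>x. \<bar>(H n x - h x) * f x\<bar> \<partial>N)"
      using integral_norm_bound[of N "\<lambda>x. (H n x - h x) * f x"] by simp
    also have "\<dots> \<le> (\<integral>x. c * \<bar>H n x - h x\<bar> \<partial>N)"
    proof (rule integral_mono)
      show "integrable N (\<lambda>x. \<bar>(H n x - h x) * f x\<bar>)"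
        using integrable_mult_bounded[OF d fN c] by auto
      show "integrable N (\<lambda>x. c * \<bar>H n x - h x\<bar>)" using d by auto
      show "\<bar>(H n x - h x) * f x\<bar> \<le> c * \<bar>H n x - h x\<bar>" for x
        using c[of x] by (metis abs_ge_zero abs_mult mult.commute mult_left_mono)
    qed
    finally show ?thesis by simp
  qed
  then have "eventually (\<lambda>n. norm (sint (signed_density N (H n)) f - sint (signed_density N h) f)
      \<le> c * (\<integral>x. \<bar>H n x - h x\<bar> \<partial>N)) sequentially"
    by (simp add: always_eventually)
  moreover have "(\<lambda>n. c * (\<integral>x. \<bar>H n x - h x\<bar> \<partial>N)) \<longlonglongrightarrow> 0"
    using tendsto_mult_right_zero[OF L1] by simp
  ultimately have "(\<lambda>n. sint (signed_density N (H n)) f - sint (signed_density N h) f) \<longlonglongrightarrow> 0"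
    by (rule Lim_null_comparison)
  then show "(\<lambda>n. sint (signed_density N (H n)) f) \<longlonglongrightarrow> sint (signed_density N h) f"
    by (rule LIM_zero_cancel)
qed

lemma integrable_density_quotient:
  fixes h s :: "'a \<Rightarrow> real"
  assumes h: "integrable N h" and s: "integrable N s"
  shows "integrable (density N (\<lambda>x. ennreal \<bar>s x\<bar>)) (\<lambda>x. h x / s x)"
proof -
  have m: "(\<lambda>x. h x / s x) \<in> borel_measurable N" "(\<lambda>x. \<bar>s x\<bar>) \<in> borel_measurable N"
    using h s by auto
  have "integrable N (\<lambda>x. \<bar>s x\<bar> * (h x / s x))"
  proof (rule Bochner_Integration.integrable_bound[OF h])
    show "(\<lambda>x. \<bar>s x\<bar> * (h x / s x)) \<in> borel_measurable N" using m by measurable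
    show "AE x in N. norm (\<bar>s x\<bar> * (h x / s x)) \<le> norm (h x)"
      by (intro AE_I2) (auto simp: abs_mult abs_divide)
  qed
  then show ?thesis by (subst integrable_density[OF m]) auto
qed

lemma integral_density_quotient:
  fixes h s g :: "'a \<Rightarrow> real"
  assumes h: "integrable N h" and s: "integrable N s" and g: "g \<in> borel_measurable N"
    and hz: "AE x in N. s x = 0 \<longrightarrow> h x = 0"
  shows "(\<integral>x. \<bar>g x - h x / s x\<bar> \<partial>density N (\<lambda>x. ennreal \<bar>s x\<bar>)) = (\<integral>x. \<bar>g x * s x - h x\<bar> \<partial>N)"
proof -
  have "(\<integral>x. \<bar>g x - h x / s x\<bar> \<partial>density N (\<lambda>x. ennreal \<bar>s x\<bar>))
      = (\<integral>x. \<bar>s x\<bar> * \<bar>g x - h x / s x\<bar> \<partial>N)"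
    using h s g by (subst integral_density) auto
  also have "\<dots> = (\<integral>x. \<bar>g x * s x - h x\<bar> \<partial>N)"
    using h s g hz
  proof (intro integral_cong_AE)
    show "AE x in N. \<bar>s x\<bar> * \<bar>g x - h x / s x\<bar> = \<bar>g x * s x - h x\<bar>"
      using hz by eventually_elim (auto simp: abs_mult[symmetric] algebra_simps)
  qed auto
  finally show ?thesis .
qed

lemma L1_approx_density_by_continuous:
  fixes N :: "'a::t2_space measure" and h s :: "'a \<Rightarrow> real"
  assumes K: "compact (UNIV :: 'a set)" and R: "radon_measure N"
    and h: "integrable N h" and s: "integrable N s" and hz: "AE x in N. s x = 0 \<longrightarrow> h x = 0"
  obtains G where "\<And>n. continuous_on UNIV (G n)"
    "(\<lambda>n. \<integral>x. \<bar>G n x * s x - h x\<bar> \<partial>N) \<longlonglongrightarrow> 0"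
proof -
  have S: "sets N = sets borel" by (rule radon_measureD[OF R])
  let ?Ns = "density N (\<lambda>x. ennreal \<bar>s x\<bar>)"
  have "radon_measure ?Ns" using radon_measure_density[OF R, of "\<lambda>x. \<bar>s x\<bar>"] s by simp
  then have "L1_limit_of_continuous ?Ns (\<lambda>x. h x / s x)"
    by (rule L1_limit_of_continuous_integrable[OF K _ integrable_density_quotient[OF h s]])
  then have "\<forall>n. \<exists>g. continuous_on UNIV g
      \<and> (\<integral>x. \<bar>g x - h x / s x\<bar> \<partial>?Ns) < inverse (real (Suc n))"
    unfolding L1_limit_of_continuous_def by simp
  then obtain G where G: "\<And>n. continuous_on UNIV (G n)"
    and err: "\<And>n. (\<integral>x. \<bar>G n x - h x / s x\<bar> \<partial>?Ns) < inverse (real (Suc n))"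
    by metis
  have "norm (\<integral>x. \<bar>G n x * s x - h x\<bar> \<partial>N) \<le> inverse (real (Suc n))" for n
    using err[of n] integral_nonneg_AE[of "\<lambda>x. \<bar>G n x * s x - h x\<bar>" N]
      integral_density_quotient[OF h s continuous_on_UNIV_measurable[OF G S] hz]
    by simp
  then have "(\<lambda>n. \<integral>x. \<bar>G n x * s x - h x\<bar> \<partial>N) \<longlonglongrightarrow> 0"
    by (intro Lim_null_comparison[OF always_eventually LIMSEQ_inverse_real_of_nat]) auto
  then show ?thesis using G that by blast
qed

lemma abs_cont_signed_density_AE:
  assumes S: "sets N = sets borel" and h: "integrable N h" and s: "integrable N s"
    and ac: "abs_cont (signed_density N h) (signed_density N s)"
  shows "AE x in N. s x = 0 \<longrightarrow> h x = 0"
proof -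
  have "s \<in> borel_measurable borel"
    using s S by (metis borel_measurable_integrable measurable_cong_sets)
  then have Z: "{x. s x = 0} \<in> sets borel" by measurable
  have "AE x in N. x \<in> {x. s x = 0} \<longrightarrow> h x = 0"
  proof (rule AE_zero_if_signed_density_vanishes[OF S h Z])
    fix E assume E: "E \<in> sets borel" "E \<subseteq> {x. s x = 0}"
    have "tot_var (signed_density N s) E = (\<integral>x. indicator E x * \<bar>s x\<bar> \<partial>N)"
      using E tot_var_signed_density[OF S s] by (simp add: signed_density_def)
    also have "\<dots> = 0"
      using E by (intro integral_eq_zero_AE) (auto simp: indicator_def)
    finally show "signed_density N h E = 0" using ac E by (simp add: abs_cont_def)
  qed
  then show ?thesis by simp
qed

lemma L1_error_nonneg_truncation:
  fixes G h s :: "'a \<Rightarrow> real"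
  assumes "AE x in N. 0 \<le> s x" "AE x in N. 0 \<le> h x"
    and "integrable N (\<lambda>x. G x * s x)" "integrable N (\<lambda>x. max 0 (G x) * s x)" "integrable N h"
  shows "(\<integral>x. \<bar>max 0 (G x) * s x - h x\<bar> \<partial>N) \<le> (\<integral>x. \<bar>G x * s x - h x\<bar> \<partial>N)"
proof (rule integral_mono_AE)
  show "AE x in N. \<bar>max 0 (G x) * s x - h x\<bar> \<le> \<bar>G x * s x - h x\<bar>"
    using assms(1,2)
  proof eventually_elim
    case (elim x)
    show ?case
    proof (cases "0 \<le> G x")
      case False
      then have "G x * s x \<le> 0" using elim by (simp add: mult_nonpos_nonneg)
      then show ?thesis using False elim by (auto simp: max_def abs_if)
    qed (simp add: max_def)
  qed
qed (use assms(3-5) in auto)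

lemma abs_cont_wstar_approx:
  fixes \<mu> \<nu> :: "'a::t2_space set \<Rightarrow> real"
  assumes K: "compact (UNIV :: 'a set)" and \<mu>: "\<mu> \<in> MK" and \<nu>: "\<nu> \<in> MK" and ac: "abs_cont \<nu> \<mu>"
  obtains G where "\<And>n. continuous_on UNIV (G n)" "wstar_conv (\<lambda>n. mult_measure (G n) \<mu>) \<nu>"
    "\<nu> \<in> MK_pos \<Longrightarrow> \<mu> \<in> MK_pos \<Longrightarrow> \<forall>n x. 0 \<le> G n x"
proof -
  obtain N h s where R: "radon_measure N" and h: "integrable N h" and s: "integrable N s"
    and \<nu>_eq: "\<nu> = signed_density N h" and \<mu>_eq: "\<mu> = signed_density N s"
    using MK_common_signed_density[OF \<nu> \<mu>] by blast
  have S: "sets N = sets borel" by (rule radon_measureD[OF R])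
  have hz: "AE x in N. s x = 0 \<longrightarrow> h x = 0"
    using abs_cont_signed_density_AE[OF S h s] ac \<nu>_eq \<mu>_eq by simp
  have conv: "wstar_conv (\<lambda>n. mult_measure (G n) \<mu>) \<nu>"
    if G: "\<And>n. continuous_on UNIV (G n)" and L1: "(\<lambda>n. \<integral>x. \<bar>G n x * s x - h x\<bar> \<partial>N) \<longlonglongrightarrow> 0" for G
    unfolding \<nu>_eq \<mu>_eq mult_measure_signed_density_continuous[OF K R s G]
    using integrable_continuous_mult[OF K S s G] L1 by (rule wstar_conv_signed_density[OF K R h])
  obtain G where G: "\<And>n. continuous_on UNIV (G n)"
    and L1: "(\<lambda>n. \<integral>x. \<bar>G n x * s x - h x\<bar> \<partial>N) \<longlonglongrightarrow> 0"
    using L1_approx_density_by_continuous[OF K R h s hz] by blast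
  show ?thesis
  proof (cases "\<nu> \<in> MK_pos \<and> \<mu> \<in> MK_pos")
    case True
    have "AE x in N. 0 \<le> h x" "AE x in N. 0 \<le> s x"
      using True AE_nonneg_if_signed_density_nonneg[OF S h]
        AE_nonneg_if_signed_density_nonneg[OF S s]
      by (auto simp: MK_pos_def \<nu>_eq \<mu>_eq)
    define G' where "G' n x = max 0 (G n x)" for n x
    have G': "continuous_on UNIV (G' n)" for n unfolding G'_def using G by (intro continuous_intros)
    have "norm (\<integral>x. \<bar>G' n x * s x - h x\<bar> \<partial>N) \<le> (\<integral>x. \<bar>G n x * s x - h x\<bar> \<partial>N)" for n
      using L1_error_nonneg_truncation[OF \<open>AE x in N. 0 \<le> s x\<close> \<open>AE x in N. 0 \<le> h x\<close>
          integrable_continuous_mult[OF K S s G]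
          integrable_continuous_mult[OF K S s G', unfolded G'_def] h]
      by (simp add: G'_def)
    then have "(\<lambda>n. \<integral>x. \<bar>G' n x * s x - h x\<bar> \<partial>N) \<longlonglongrightarrow> 0"
      by (intro Lim_null_comparison[OF always_eventually L1]) simp
    then show ?thesis using that[OF G' conv[OF G']] by (simp add: G'_def)
  next
    case False
    then show ?thesis using that[OF G conv[OF G L1]] by blast
  qed
qed

theorem lemma2p2:
  fixes r :: "'i rel" and \<alpha> :: 'i
    and \<mu> \<nu> :: "'a::t2_space set \<Rightarrow> real"
  assumes K_compact: "compact (UNIV :: 'a set)"
    and wo: "Well_order r" and \<alpha>_in: "\<alpha> \<in> Field r"
    and \<alpha>_countable: "countable (Order_Relation.underS r \<alpha>)"
    and \<mu>_in: "\<mu> \<in> Seq r \<alpha> co_Delta"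
    and \<nu>_M: "\<nu> \<in> MK"
    and ac: "abs_cont \<nu> \<mu>"
  shows "\<nu> \<in> seq_cl (Seq r \<alpha> span_Delta)
         \<and> (\<nu> \<in> MK_pos \<longrightarrow> \<nu> \<in> seq_cl (Seq r \<alpha> (MK_pos \<inter> span_Delta)))"
proof -
  have "Seq r \<alpha> (co_Delta :: ('a set \<Rightarrow> real) set) \<subseteq> MK_pos"
    using wo co_Delta_subset_MK_pos wstar_limit_MK_pos[OF K_compact] by (rule Seq_subset)
  then have \<mu>_pos: "\<mu> \<in> MK_pos" using \<mu>_in by blast
  then obtain G where G: "\<And>n. continuous_on UNIV (G n)"
    and conv: "wstar_conv (\<lambda>n. mult_measure (G n) \<mu>) \<nu>"
    and G_nonneg: "\<nu> \<in> MK_pos \<Longrightarrow> \<forall>n x. 0 \<le> G n x"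
    using abs_cont_wstar_approx[OF K_compact _ \<nu>_M ac] by (auto simp: MK_pos_def)
  have "mult_measure (G n) \<mu> \<in> Seq r \<alpha> span_Delta" for n
    using mult_measure_Seq(1)[OF K_compact wo G] \<mu>_in by blast
  then have "\<nu> \<in> seq_cl (Seq r \<alpha> span_Delta)" using \<nu>_M conv by (intro seq_clI)
  moreover have "\<nu> \<in> seq_cl (Seq r \<alpha> (MK_pos \<inter> span_Delta))" if \<nu>_pos: "\<nu> \<in> MK_pos"
  proof -
    have "mult_measure (G n) \<mu> \<in> Seq r \<alpha> (MK_pos \<inter> span_Delta)" for n
      using mult_measure_Seq(2)[OF K_compact wo G] G_nonneg[OF \<nu>_pos] \<mu>_in by blast
    then show ?thesis using \<nu>_M conv by (intro seq_clI)
  qed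
  ultimately show ?thesis by blast
qed

end
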